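(* Let $H$ be a real Hilbert space, let $m\ge1$, let $\mathcal{A}_i:H\to2^H$ ($i=1,\dots,m$) be maximally monotone, let $\mathcal{B}:H\to H$ be monotone and $L$-Lipschitz ($L>0$), let $\mathcal{C}:H\to H$ be $\beta$-cocoercive ($\beta>0$), and assume that the set of $\mathbf{x}\in H$ with $0\in\sum_{i=1}^m\mathcal{A}_i\mathbf{x}+\mathcal{B}\mathbf{x}+\mathcal{C}\mathbf{x}$ is nonempty. Let $\omega_1,\dots,\omega_m\in(0,1]$ with $\sum_i\omega_i=1$, and let $\gamma\in\left(0,\frac{\beta}{2(1+4\beta L)}\right)$. Let $(\mathbf{z}_{i,0})_{i},(\mathbf{y}_{i,0})_i,(\mathbf{y}_{i,-1})_i\in H^m$ and iterate, for $n\ge0$, $$\mathbf{x}_{n+1}=\sum_{j=1}^m\omega_j\mathbf{z}_{j,n},$$ and for $i=1,\dots,m$: $$\mathbf{y}_{i,n+1}=J_{\frac{\gamma}{\omega_i}\mathcal{A}_i}\big(2\mathbf{x}_{n+1}-\mathbf{z}_{i,n}-2\gamma\mathcal{B}\mathbf{y}_{i,n}+\gamma\mathcal{B}\mathbf{y}_{i,n-1}-\gamma\mathcal{C}\mathbf{y}_{i,n}\big),\qquad \mathbf{z}_{i,n+1}=\mathbf{z}_{i,n}+\mathbf{y}_{i,n+1}-\mathbf{x}_{n+1}.$$ Then $\{\mathbf{x}_n\}$ converges weakly to a point $\mathbf{x}$ satisfying $0\in\sum_{i=1}^m\mathcal{A}_i\mathbf{x}+\mathcal{B}\mathbf{x}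+\mathcal{C}\mathbf{x}$.
   Context: $J_{T}=(\mathrm{Id}+T)^{-1}$ is the resolvent of a maximally monotone operator $T$. $\beta$-cocoercive means $\langle x-y,\mathcal{C}x-\mathcal{C}y\rangle\ge\beta\|\mathcal{C}x-\mathcal{C}y\|^2$ for all $x,y$. *)

theory Defs
  imports "HOL-Analysis.Analysis"
begin

definition monotone_op :: "('a::real_inner \<Rightarrow> 'a set) \<Rightarrow> bool" where
  "monotone_op A \<longleftrightarrow> (\<forall>x y u v. u \<in> A x \<longrightarrow> v \<in> A y \<longrightarrow> inner (x - y) (u - v) \<ge> 0)"

definition maximal_monotone :: "('a::real_inner \<Rightarrow> 'a set) \<Rightarrow> bool" where
  "maximal_monotone A \<longleftrightarrow> monotone_op A \<and>
     (\<forall>x u. (\<forall>y v. v \<in> A y \<longrightarrow> inner (x - y) (u - v) \<ge> 0) \<longrightarrow> u \<in> A x)"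

definition monotone_fun :: "('a::real_inner \<Rightarrow> 'a) \<Rightarrow> bool" where
  "monotone_fun B \<longleftrightarrow> (\<forall>x y. inner (x - y) (B x - B y) \<ge> 0)"

definition cocoercive :: "real \<Rightarrow> ('a::real_inner \<Rightarrow> 'a) \<Rightarrow> bool" where
  "cocoercive \<beta> C \<longleftrightarrow> (\<forall>x y. inner (x - y) (C x - C y) \<ge> \<beta> * (norm (C x - C y))\<^sup>2)"

definition scale_op :: "real \<Rightarrow> ('a::real_vector \<Rightarrow> 'a set) \<Rightarrow> 'a \<Rightarrow> 'a set" where
  "scale_op c A = (\<lambda>x. (\<lambda>u. c *\<^sub>R u) ` A x)"

text \<open>Resolvent J_A = (Id + A)^{-1}; for maximally monotone A it is single-valued and
  everywhere defined (Minty), so J_A x is the unique p with x \<in> p + A p.\<close>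
definition resolvent :: "('a::real_vector \<Rightarrow> 'a set) \<Rightarrow> 'a \<Rightarrow> 'a" where
  "resolvent A x = (THE p. x - p \<in> A p)"

definition zer_sum :: "nat \<Rightarrow> (nat \<Rightarrow> 'a::real_vector \<Rightarrow> 'a set) \<Rightarrow> ('a \<Rightarrow> 'a) \<Rightarrow> ('a \<Rightarrow> 'a) \<Rightarrow> 'a set" where
  "zer_sum m A B C = {x. \<exists>a. (\<forall>i<m. a i \<in> A i x) \<and> (\<Sum>i<m. a i) + B x + C x = 0}"

definition weakly_converges :: "(nat \<Rightarrow> 'a::real_inner) \<Rightarrow> 'a \<Rightarrow> bool" where
  "weakly_converges s x \<longleftrightarrow> (\<forall>w. (\<lambda>n. inner (s n) w) \<longlonglongrightarrow> inner x w)"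

end

theory Submission
  imports Defs "HOL-Library.Diagonal_Subsequence"
begin

text \<open>Fix a zero \<open>x\<close> of the sum, elements \<open>a i \<in> A i x\<close> with \<open>\<Sum> a i + B x + C x = 0\<close>, and
  let \<open>z' i = x - (\<gamma> / \<omega> i) a i - \<gamma> (B x + C x)\<close> be the corresponding fixed point of the
  \<open>z\<close>-update. Monotonicity of the \<open>A i\<close> and of \<open>B\<close>, cocoercivity of \<open>C\<close> and the Lipschitz bound
  for the reflected term \<open>2 B (y n) - B (y (n - 1))\<close> show that
  \<open>\<Psi> n = \<Sum> \<omega> i \<parallel>z (n + 1) i - z' i\<parallel>\<^sup>2 - \<Phi> n + (multiples of the last increments)\<close>
  decreases by \<open>(1 - 4 \<kappa>) \<Sum> \<omega> i \<parallel>z (n + 2) i - z (n + 1) i\<parallel>\<^sup>2\<close>, where \<open>\<Phi> n\<close> collects the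
  \<open>B\<close>-terms and \<open>4 \<kappa> < 1\<close> is the step size condition. Hence the increments are square
  summable, \<open>\<Phi> n \<rightarrow> 0\<close>, and the weighted distance of \<open>z n\<close> to every such \<open>z'\<close> converges.
  Passing to the limit in the monotonicity inequalities along a weakly convergent subsequence
  (the only quadratic term cancels because \<open>x (n + 1)\<close> is the \<open>\<omega>\<close>-mean of the \<open>z n i\<close>) and
  using Minty's trick shows that every weak cluster point of \<open>z\<close> is of the form \<open>z'\<close>. Opial's
  argument then gives weak convergence of \<open>z\<close>, hence of \<open>x\<close>, to a zero of the sum.\<close>

section \<open>Minimisation in Hilbert spaces\<close>

text \<open>A possibly infinite-valued function \<open>f\<close> is given by its epigraph \<open>Epi p t \<longleftrightarrow> f p \<le> t\<close>;
  the midpoint condition says that \<open>f\<close> is strongly convex. Orthogonal projections (hence the Riesz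
  representation and weak sequential compactness) and Minty's theorem are derived from this
  minimisation principle.\<close>

lemma Cauchy_if_sq_dist_le:
  fixes ps :: "nat \<Rightarrow> 'a::real_normed_vector"
  assumes k: "k > 0" and e: "e \<longlonglongrightarrow> 0"
    and dist_sq: "\<And>a b. k * (norm (ps a - ps b))\<^sup>2 \<le> (e a + e b) / 2"
  shows "Cauchy ps"
proof (rule metric_CauchyI)
  fix r :: real assume r: "r > 0"
  have "eventually (\<lambda>n. e n < k * r\<^sup>2) sequentially"
    using e k r by (intro order_tendstoD) auto
  then obtain N where N: "\<And>n. n \<ge> N \<Longrightarrow> e n < k * r\<^sup>2"
    unfolding eventually_sequentially by blast
  have "dist (ps a) (ps b) < r" if "a \<ge> N" "b \<ge> N" for a b
  proof -
    have "k * (norm (ps a - ps b))\<^sup>2 < k * r\<^sup>2"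
      using dist_sq[of a b] N[OF that(1)] N[OF that(2)] unfolding add_divide_distrib by linarith
    hence "(norm (ps a - ps b))\<^sup>2 < r\<^sup>2" using k by simp
    thus ?thesis using r by (simp add: dist_norm power_less_imp_less_base)
  qed
  thus "\<exists>N. \<forall>a\<ge>N. \<forall>b\<ge>N. dist (ps a) (ps b) < r" by blast
qed

lemma strongly_convex_epigraph_has_min:
  fixes Epi :: "'a::{real_inner,complete_space} \<Rightarrow> real \<Rightarrow> bool"
  assumes nonempty: "Epi p1 t1"
    and bounded_below: "\<And>p t. Epi p t \<Longrightarrow> c \<le> t"
    and k: "k > 0"
    and midpoint: "\<And>p t p' t'. Epi p t \<Longrightarrow> Epi p' t' \<Longrightarrow>
              Epi ((1/2) *\<^sub>R (p + p')) ((t + t') / 2 - k * (norm (p - p'))\<^sup>2)"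
    and closed: "\<And>ps ts p t. (\<And>n. Epi (ps n) (ts n)) \<Longrightarrow> ps \<longlonglongrightarrow> p \<Longrightarrow> ts \<longlonglongrightarrow> t \<Longrightarrow> Epi p t"
  shows "\<exists>p \<mu>. Epi p \<mu> \<and> (\<forall>p' t. Epi p' t \<longrightarrow> \<mu> \<le> t)"
proof -
  define \<mu> where "\<mu> = Inf {t. \<exists>p. Epi p t}"
  define e :: "nat \<Rightarrow> real" where "e n = 1 / (real n + 1)" for n
  have e_pos: "e n > 0" for n unfolding e_def by simp
  have e_lim: "e \<longlonglongrightarrow> 0"
    unfolding e_def using LIMSEQ_inverse_real_of_nat by (simp add: inverse_eq_divide add.commute)
  have \<mu>_le: "\<mu> \<le> t" if "Epi p t" for p t
    unfolding \<mu>_def using that bounded_below by (intro cInf_lower bdd_belowI) auto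
  have "\<exists>p t. Epi p t \<and> t < \<mu> + e n" for n
    using cInf_lessD[of "{t. \<exists>p. Epi p t}" "\<mu> + e n"] nonempty e_pos unfolding \<mu>_def by force
  then obtain ps ts where Epi_ps: "\<And>n. Epi (ps n) (ts n)" and ts_lt: "\<And>n. ts n < \<mu> + e n"
    by metis
  have "k * (norm (ps a - ps b))\<^sup>2 \<le> (e a + e b) / 2" for a b
    using \<mu>_le[OF midpoint[OF Epi_ps[of a] Epi_ps[of b]]] ts_lt[of a] ts_lt[of b]
    by (simp add: field_simps)
  then obtain p where "ps \<longlonglongrightarrow> p"
    using Cauchy_if_sq_dist_le[OF k e_lim] Cauchy_convergent_iff convergent_def by blast
  moreover have "ts \<longlonglongrightarrow> \<mu>"
  proof (rule tendsto_sandwich[of "\<lambda>n. \<mu>" _ _ "\<lambda>n. \<mu> + e n"])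
    show "\<forall>\<^sub>F n in sequentially. \<mu> \<le> ts n" using \<mu>_le[OF Epi_ps] by simp
    show "\<forall>\<^sub>F n in sequentially. ts n \<le> \<mu> + e n" using ts_lt by (simp add: less_imp_le)
    show "(\<lambda>n. \<mu> + e n) \<longlonglongrightarrow> \<mu>" using tendsto_add[OF tendsto_const e_lim] by simp
  qed simp
  ultimately have "Epi p \<mu>" by (rule closed[OF Epi_ps])
  thus ?thesis using \<mu>_le by blast
qed

lemma norm_midpoint_sq:
  fixes a b :: "'a::real_inner"
  shows "(norm ((1/2) *\<^sub>R (a + b)))\<^sup>2 = (norm a)\<^sup>2 / 2 + (norm b)\<^sup>2 / 2 - (norm (a - b))\<^sup>2 / 4"
  by (simp add: power2_norm_eq_inner inner_add inner_diff inner_commute field_simps)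

lemma norm_add_scaleR_sq:
  fixes a b :: "'a::real_inner"
  shows "(norm (a + t *\<^sub>R b))\<^sup>2 = (norm a)\<^sup>2 + 2 * t * inner a b + t\<^sup>2 * (norm b)\<^sup>2"
  unfolding power2_norm_eq_inner by (simp add: inner_add inner_commute power2_eq_square algebra_simps)

lemma closed_subspace_nearest_point:
  fixes S :: "'a::{real_inner,complete_space} set"
  assumes S: "subspace S" "closed S"
  shows "\<exists>c\<in>S. \<forall>s\<in>S. norm (w - c) \<le> norm (w - s)"
proof -
  define Epi where "Epi p t \<longleftrightarrow> p \<in> S \<and> (norm (w - p))\<^sup>2 \<le> t" for p t
  have mid: "Epi ((1/2) *\<^sub>R (p + p')) ((t + t') / 2 - (1/4) * (norm (p - p'))\<^sup>2)"
    if "Epi p t" "Epi p' t'" for p t p' t'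
  proof -
    have "(1/2) *\<^sub>R (p + p') \<in> S"
      using that S(1) unfolding Epi_def by (simp add: subspace_add subspace_scale)
    moreover have "w - (1/2) *\<^sub>R (p + p') = (1/2) *\<^sub>R ((w - p) + (w - p'))"
      by (simp add: algebra_simps flip: scaleR_add_left)
    ultimately show ?thesis
      using that norm_midpoint_sq[of "w - p" "w - p'"] unfolding Epi_def
      by (simp add: norm_minus_commute add_divide_distrib)
  qed
  have closed: "Epi p t" if "\<And>n. Epi (ps n) (ts n)" "ps \<longlonglongrightarrow> p" "ts \<longlonglongrightarrow> t" for ps ts p t
  proof -
    have "p \<in> S" using S(2) that(1,2) unfolding Epi_def closed_sequential_limits by blast
    moreover have "(\<lambda>n. (norm (w - ps n))\<^sup>2) \<longlonglongrightarrow> (norm (w - p))\<^sup>2"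
      by (intro tendsto_intros that(2))
    ultimately show ?thesis using that(1,3) unfolding Epi_def by (meson LIMSEQ_le)
  qed
  have "Epi 0 ((norm w)\<^sup>2)" using S(1) unfolding Epi_def by (simp add: subspace_0)
  hence "\<exists>c \<mu>. Epi c \<mu> \<and> (\<forall>p t. Epi p t \<longrightarrow> \<mu> \<le> t)"
    by (rule strongly_convex_epigraph_has_min[where Epi = Epi and c = 0, OF _ _ _ mid closed])
      (auto simp: Epi_def intro: order_trans[OF zero_le_power2])
  then obtain c \<mu> where c: "Epi c \<mu>" and \<mu>_min: "\<And>p t. Epi p t \<Longrightarrow> \<mu> \<le> t"
    by blast
  have "(norm (w - c))\<^sup>2 \<le> (norm (w - s))\<^sup>2" if "s \<in> S" for s
  proof -
    have "\<mu> \<le> (norm (w - s))\<^sup>2" using \<mu>_min[of s] that unfolding Epi_def by simp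
    thus ?thesis using c unfolding Epi_def by linarith
  qed
  thus ?thesis using c unfolding Epi_def by (meson norm_ge_zero power2_le_imp_le)
qed

lemma nearest_point_orthogonal:
  assumes S: "subspace S" and c: "c \<in> S" and nearest: "\<forall>s\<in>S. norm (w - c) \<le> norm (w - s)"
    and s: "s \<in> S"
  shows "inner (w - c) s = 0"
proof -
  define a where "a = inner (w - c) s"
  define \<tau> where "\<tau> = a / ((norm s)\<^sup>2 + 1)"
  have a_eq: "a = \<tau> * ((norm s)\<^sup>2 + 1)"
    using add_nonneg_pos[OF zero_le_power2[of "norm s"] zero_less_one] unfolding \<tau>_def by simp
  have "c + \<tau> *\<^sub>R s \<in> S" using c s S by (simp add: subspace_add subspace_scale)
  with nearest have "norm (w - c) \<le> norm ((w - c) + (- \<tau>) *\<^sub>R s)"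
    by (force simp: algebra_simps)
  hence "(norm (w - c))\<^sup>2 \<le> (norm ((w - c) + (- \<tau>) *\<^sub>R s))\<^sup>2"
    by (simp add: power_mono)
  hence "0 \<le> - 2 * \<tau> * a + \<tau>\<^sup>2 * (norm s)\<^sup>2"
    unfolding norm_add_scaleR_sq a_def by simp
  also have "\<dots> = - \<tau>\<^sup>2 * ((norm s)\<^sup>2 + 2)"
    unfolding a_eq by (simp add: power2_eq_square algebra_simps)
  finally have "\<tau>\<^sup>2 * ((norm s)\<^sup>2 + 2) \<le> 0" by simp
  hence "\<tau> = 0" using zero_le_power2[of "norm s"] by (simp add: mult_le_0_iff)
  thus ?thesis using a_eq a_def by simp
qed

lemma closed_subspace_orthogonal_projection:
  fixes S :: "'a::{real_inner,complete_space} set"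
  assumes "subspace S" "closed S"
  shows "\<exists>c\<in>S. \<forall>s\<in>S. inner (w - c) s = 0"
  using closed_subspace_nearest_point[OF assms] nearest_point_orthogonal[OF assms(1)] by blast

lemma riesz_representation:
  fixes f :: "'a::{real_inner,complete_space} \<Rightarrow> real"
  assumes f: "bounded_linear f"
  shows "\<exists>z. \<forall>x. f x = inner z x"
proof (cases "\<forall>x. f x = 0")
  case True
  thus ?thesis by (intro exI[of _ 0]) simp
next
  case False
  then obtain w where w: "f w \<noteq> 0" by blast
  interpret f: bounded_linear f by (fact f)
  have "subspace {x. f x = 0}" by (simp add: subspace_def f.add f.scale)
  moreover have "closed {x. f x = 0}"
    by (intro closed_Collect_eq f.continuous_on continuous_on_const continuous_on_id)
  ultimately obtain c where c: "f c = 0" "\<And>s. f s = 0 \<Longrightarrow> inner (w - c) s = 0"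
    using closed_subspace_orthogonal_projection by blast
  define e where "e = w - c"
  have fe: "f e = f w" unfolding e_def by (simp add: f.diff c(1))
  have "f x = inner ((f e / inner e e) *\<^sub>R e) x" for x
  proof -
    have "f (x - (f x / f e) *\<^sub>R e) = 0" using w fe by (simp add: f.diff f.scale)
    hence "inner e (x - (f x / f e) *\<^sub>R e) = 0" using c(2) unfolding e_def by blast
    hence "inner e x = (f x / f e) * inner e e" by (simp add: inner_diff_right)
    moreover have "e \<noteq> 0" using w fe by auto
    ultimately show ?thesis using w fe by (simp add: field_simps)
  qed
  thus ?thesis by blast
qed

section \<open>Weak convergence\<close>

lemma weakly_converges_subseq:
  assumes "weakly_converges s l" "strict_mono h"
  shows "weakly_converges (\<lambda>k. s (h k)) l"
  using assms LIMSEQ_subseq_LIMSEQ unfolding weakly_converges_def o_def by blast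

lemma weakly_converges_sum:
  assumes "\<And>j. j \<in> J \<Longrightarrow> weakly_converges (\<lambda>k. s k j) (l j)"
  shows "weakly_converges (\<lambda>k. \<Sum>j\<in>J. c j *\<^sub>R s k j) (\<Sum>j\<in>J. c j *\<^sub>R l j)"
  using assms unfolding weakly_converges_def
  by (simp add: inner_sum_left) (intro allI tendsto_sum tendsto_mult_left; blast)

lemma inner_convergent_subspace: "subspace {w. convergent (\<lambda>k. inner (v k) w)}"
  unfolding subspace_def
  by (auto simp: inner_add_right convergent_const intro: convergent_add convergent_mult[OF convergent_const])

lemma inner_convergent_closed:
  fixes v :: "nat \<Rightarrow> 'a::real_inner"
  assumes bounded: "\<And>k. norm (v k) \<le> M"
  shows "closed {w. convergent (\<lambda>k. inner (v k) w)}"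
  unfolding closed_sequential_limits
proof (intro allI impI, elim conjE)
  fix ws w assume ws: "\<forall>n. ws n \<in> {w. convergent (\<lambda>k. inner (v k) w)}" and "ws \<longlonglongrightarrow> w"
  have M: "M \<ge> 0" using bounded[of 0] norm_ge_zero order_trans by blast
  have "Cauchy (\<lambda>k. inner (v k) w)"
  proof (rule metric_CauchyI)
    fix e :: real assume e: "e > 0"
    have "e / (3 * (M + 1)) > 0" using e M by simp
    then obtain n where n: "norm (ws n - w) < e / (3 * (M + 1))"
      using LIMSEQ_D[OF \<open>ws \<longlonglongrightarrow> w\<close>] by blast
    have close: "\<bar>inner (v a) (w - ws n)\<bar> < e / 3" for a
    proof -
      have "\<bar>inner (v a) (w - ws n)\<bar> \<le> M * norm (w - ws n)"
        using Cauchy_Schwarz_ineq2[of "v a" "w - ws n"] bounded[of a]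
        by (meson mult_right_mono norm_ge_zero order_trans)
      also have "\<dots> \<le> (M + 1) * norm (w - ws n)" by (simp add: mult_right_mono)
      also have "\<dots> < (M + 1) * (e / (3 * (M + 1)))"
        using n M by (intro mult_strict_left_mono) (simp_all add: norm_minus_commute)
      also have "\<dots> = e / 3" using M by (simp add: field_simps)
      finally show ?thesis .
    qed
    have "Cauchy (\<lambda>k. inner (v k) (ws n))" using ws convergent_Cauchy by blast
    then obtain N where N: "\<And>a b. a \<ge> N \<Longrightarrow> b \<ge> N \<Longrightarrow> \<bar>inner (v a) (ws n) - inner (v b) (ws n)\<bar> < e / 3"
      using e unfolding Cauchy_def dist_real_def by (meson divide_pos_pos zero_less_numeral)
    have "\<bar>inner (v a) w - inner (v b) w\<bar> < e" if "a \<ge> N" "b \<ge> N" for a b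
      using N[OF that] close[of a] close[of b] unfolding inner_diff_right by arith
    thus "\<exists>N. \<forall>a\<ge>N. \<forall>b\<ge>N. dist (inner (v a) w) (inner (v b) w) < e"
      unfolding dist_real_def by blast
  qed
  thus "w \<in> {w. convergent (\<lambda>k. inner (v k) w)}" using Cauchy_convergent_iff by blast
qed

lemma weakly_converges_if_inner_convergent:
  fixes v :: "nat \<Rightarrow> 'a::{real_inner,complete_space}"
  assumes bounded: "\<And>k. norm (v k) \<le> M" and conv: "\<And>w. convergent (\<lambda>k. inner (v k) w)"
  shows "\<exists>l. weakly_converges v l"
proof -
  define f where "f w = lim (\<lambda>k. inner (v k) w)" for w
  have f_lim: "(\<lambda>k. inner (v k) w) \<longlonglongrightarrow> f w" for w
    using conv unfolding f_def by (simp add: convergent_LIMSEQ_iff)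
  have "bounded_linear f"
  proof (rule bounded_linear_intro[of f M])
    show "f (x + y) = f x + f y" for x y
      using tendsto_add[OF f_lim[of x] f_lim[of y]]
      by (simp add: inner_add_right LIMSEQ_unique[OF f_lim[of "x + y"]])
    show "f (r *\<^sub>R x) = r *\<^sub>R f x" for r x
      using tendsto_mult_left[OF f_lim[of x], of r] by (simp add: LIMSEQ_unique[OF f_lim])
    show "norm (f x) \<le> norm x * M" for x
    proof (rule LIMSEQ_le_const2[OF tendsto_norm[OF f_lim]])
      show "\<exists>N. \<forall>k\<ge>N. norm (inner (v k) x) \<le> norm x * M"
        using Cauchy_Schwarz_ineq2 bounded
        by (metis mult.commute mult_right_mono norm_ge_zero order_trans real_norm_def)
    qed
  qed
  then obtain l where "\<And>w. f w = inner l w" using riesz_representation by blast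
  hence "weakly_converges v l"
    unfolding weakly_converges_def using f_lim by (simp add: inner_commute)
  thus ?thesis by blast
qed

lemma bounded_seq_diagonal_inner_convergent:
  fixes u :: "nat \<Rightarrow> 'a::real_inner"
  assumes bounded: "\<And>n. norm (u n) \<le> M"
  shows "\<exists>g. strict_mono g \<and> (\<forall>j. convergent (\<lambda>k. inner (u (g k)) (u j)))"
proof -
  define P where "P j s \<longleftrightarrow> convergent (\<lambda>k. inner (u (s k)) (u j))" for j and s :: "nat \<Rightarrow> nat"
  interpret S: subseqs P
  proof
    fix j and s :: "nat \<Rightarrow> nat" assume "strict_mono s"
    obtain r where r: "strict_mono r" "monoseq (\<lambda>k. inner (u (s (r k))) (u j))"
      using seq_monosub[of "\<lambda>k. inner (u (s k)) (u j)"] by blast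
    have "\<bar>inner (u (s (r k))) (u j)\<bar> \<le> M * norm (u j)" for k
      using Cauchy_Schwarz_ineq2[of "u (s (r k))" "u j"] bounded[of "s (r k)"]
      by (meson mult_right_mono norm_ge_zero order_trans)
    hence "Bseq (\<lambda>k. inner (u (s (r k))) (u j))" by (intro BseqI') simp
    hence "P j (s \<circ> r)" using r(2) Bseq_monoseq_convergent unfolding P_def o_def by blast
    thus "\<exists>r'. strict_mono r' \<and> P j (s \<circ> r')" using r(1) by blast
  qed
  have diag: "P j (S.diagseq \<circ> ((+) (Suc j)))" for j
  proof (rule S.diagseq_holds)
    show "P n (s \<circ> r)" if "strict_mono r" "P n s" for r s n
      using that convergent_subseq_convergent[of _ r] unfolding P_def by (auto simp: o_def)
  qed
  have "convergent (\<lambda>k. inner (u (S.diagseq (k + Suc j))) (u j))" for j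
    using diag[of j] unfolding P_def o_def by (simp add: add.commute)
  hence "convergent (\<lambda>k. inner (u (S.diagseq k)) (u j))" for j
    using convergent_ignore_initial_segment by blast
  thus ?thesis using S.subseq_diagseq by blast
qed

lemma bounded_seq_has_weakly_convergent_subseq:
  fixes u :: "nat \<Rightarrow> 'a::{real_inner,complete_space}"
  assumes bounded: "\<And>n. norm (u n) \<le> M"
  shows "\<exists>g l. strict_mono g \<and> weakly_converges (\<lambda>k. u (g k)) l"
proof -
  obtain g where g: "strict_mono g" and conv_u: "\<And>j. convergent (\<lambda>k. inner (u (g k)) (u j))"
    using bounded_seq_diagonal_inner_convergent[of u, OF bounded] by blast
  define V where "V = {w. convergent (\<lambda>k. inner (u (g k)) w)}"
  have "subspace V" unfolding V_def by (rule inner_convergent_subspace)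
  moreover have "closed V" unfolding V_def by (rule inner_convergent_closed) (rule bounded)
  moreover have u_in_V: "u (g k) \<in> V" for k unfolding V_def using conv_u by simp
  ultimately have "convergent (\<lambda>k. inner (u (g k)) w)" for w
  proof -
    obtain c where c: "c \<in> V" and orth: "\<forall>s\<in>V. inner (w - c) s = 0"
      using closed_subspace_orthogonal_projection[OF \<open>subspace V\<close> \<open>closed V\<close>] by blast
    have "inner (u (g k)) w = inner (u (g k)) c" for k
    proof -
      have "inner (w - c) (u (g k)) = 0" using orth u_in_V by blast
      thus ?thesis by (metis inner_commute inner_diff_left eq_iff_diff_eq_0)
    qed
    thus ?thesis using c unfolding V_def by simp
  qed
  with bounded obtain l where "weakly_converges (\<lambda>k. u (g k)) l"
    using weakly_converges_if_inner_convergent[of "\<lambda>k. u (g k)"] by blast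
  thus ?thesis using g by blast
qed

lemma bounded_seqs_have_weakly_convergent_subseq:
  fixes u :: "nat \<Rightarrow> nat \<Rightarrow> 'a::{real_inner,complete_space}"
  assumes "\<And>n i. i < m \<Longrightarrow> norm (u n i) \<le> M"
  shows "\<exists>g l. strict_mono g \<and> (\<forall>i<m. weakly_converges (\<lambda>k. u (g k) i) (l i))"
  using assms
proof (induction m)
  case 0
  show ?case using strict_mono_id by blast
next
  case (Suc m)
  have "norm (u n i) \<le> M" if "i < m" for n i using Suc.prems that by simp
  then obtain g l where g: "strict_mono g" and l: "\<forall>i<m. weakly_converges (\<lambda>k. u (g k) i) (l i)"
    using Suc.IH by blast
  have "norm (u (g k) m) \<le> M" for k using Suc.prems by simp
  then obtain h lm where h: "strict_mono h" and lm: "weakly_converges (\<lambda>k. u (g (h k)) m) lm"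
    using bounded_seq_has_weakly_convergent_subseq[of "\<lambda>k. u (g k) m" M] by blast
  have "weakly_converges (\<lambda>k. u (g (h k)) i) ((l(m := lm)) i)" if "i < Suc m" for i
  proof (cases "i = m")
    case False
    thus ?thesis using weakly_converges_subseq[OF l[rule_format] h] that by simp
  qed (use lm in simp)
  hence "strict_mono (g \<circ> h) \<and> (\<forall>i<Suc m. weakly_converges (\<lambda>k. u ((g \<circ> h) k) i) ((l(m := lm)) i))"
    using strict_mono_o[OF g h] by simp
  thus ?case by blast
qed

lemma not_LIMSEQ_imp_subseq_bounded_away:
  fixes f :: "nat \<Rightarrow> 'a::metric_space"
  assumes "\<not> f \<longlonglongrightarrow> l"
  shows "\<exists>e>0. \<exists>r::nat \<Rightarrow> nat. strict_mono r \<and> (\<forall>n. e \<le> dist (f (r n)) l)"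
proof -
  obtain e where e: "e > 0" and far: "\<And>N. \<exists>n\<ge>N. e \<le> dist (f n) l"
    using assms unfolding lim_sequentially not_all not_ex not_imp not_less by blast
  have "infinite {n. e \<le> dist (f n) l}"
    unfolding infinite_nat_iff_unbounded_le using far by simp
  from infinite_enumerate[OF this] obtain r :: "nat \<Rightarrow> nat"
    where "strict_mono r" "\<forall>n. r n \<in> {n. e \<le> dist (f n) l}" by blast
  hence "strict_mono r \<and> (\<forall>n. e \<le> dist (f (r n)) l)" by simp
  thus ?thesis using e by blast
qed

lemma weakly_converges_if_clusters_eq:
  fixes u :: "nat \<Rightarrow> nat \<Rightarrow> 'a::{real_inner,complete_space}"
  assumes bounded: "\<And>n i. i < m \<Longrightarrow> norm (u n i) \<le> M"
    and clusters: "\<And>g l. strict_mono g \<Longrightarrow> \<forall>i<m. weakly_converges (\<lambda>k. u (g k) i) (l i) \<Longrightarrow>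
                      \<forall>i<m. l i = c i"
    and i: "i < m"
  shows "weakly_converges (\<lambda>n. u n i) (c i)"
  unfolding weakly_converges_def
proof (rule allI, rule ccontr)
  fix w assume "\<not> (\<lambda>n. inner (u n i) w) \<longlonglongrightarrow> inner (c i) w"
  from not_LIMSEQ_imp_subseq_bounded_away[OF this]
  obtain e and r :: "nat \<Rightarrow> nat" where e: "e > 0" and r: "strict_mono r"
    and far: "\<And>n. e \<le> dist (inner (u (r n) i) w) (inner (c i) w)"
    by blast
  have "norm (u (r n) j) \<le> M" if "j < m" for n j using bounded[OF that] .
  then obtain g l where g: "strict_mono g" and l: "\<forall>j<m. weakly_converges (\<lambda>k. u (r (g k)) j) (l j)"
    using bounded_seqs_have_weakly_convergent_subseq[of m "\<lambda>n. u (r n)" M] by blast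
  have "l i = c i" using clusters[OF strict_mono_o[OF r g]] l i by (simp add: o_def)
  hence "(\<lambda>k. inner (u (r (g k)) i) w) \<longlonglongrightarrow> inner (c i) w"
    using l i unfolding weakly_converges_def by auto
  then obtain k where "dist (inner (u (r (g k)) i) w) (inner (c i) w) < e"
    using e unfolding LIMSEQ_def by blast
  thus False using far[of "g k"] by simp
qed

lemma weak_clusters_eq_if_weighted_dist_convergent:
  fixes u :: "nat \<Rightarrow> nat \<Rightarrow> 'a::real_inner"
  assumes \<omega>: "\<And>i. i < m \<Longrightarrow> \<omega> i > 0"
    and g: "strict_mono g" "\<forall>i<m. weakly_converges (\<lambda>k. u (g k) i) (l i)"
    and h: "strict_mono h" "\<forall>i<m. weakly_converges (\<lambda>k. u (h k) i) (l' i)"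
    and conv: "convergent (\<lambda>n. \<Sum>i<m. \<omega> i * (norm (u n i - l i))\<^sup>2)"
    and conv': "convergent (\<lambda>n. \<Sum>i<m. \<omega> i * (norm (u n i - l' i))\<^sup>2)"
  shows "\<forall>i<m. l i = l' i"
proof -
  define cross where "cross n = (\<Sum>i<m. \<omega> i * inner (u n i) (l' i - l i))" for n
  define K where "K = (\<Sum>i<m. \<omega> i * ((norm (l i))\<^sup>2 - (norm (l' i))\<^sup>2))"
  have cross_eq: "cross n = ((\<Sum>i<m. \<omega> i * (norm (u n i - l i))\<^sup>2)
      - (\<Sum>i<m. \<omega> i * (norm (u n i - l' i))\<^sup>2) - K) / 2" for n
  proof -
    have "cross n = (\<Sum>i<m. (\<omega> i * (norm (u n i - l i))\<^sup>2 - \<omega> i * (norm (u n i - l' i))\<^sup>2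
        - \<omega> i * ((norm (l i))\<^sup>2 - (norm (l' i))\<^sup>2)) / 2)"
      unfolding cross_def
      by (intro sum.cong) (simp_all add: power2_norm_eq_inner inner_diff inner_commute algebra_simps)
    thus ?thesis by (simp only: sum_divide_distrib[symmetric] sum_subtractf K_def)
  qed
  obtain d d' where "(\<lambda>n. \<Sum>i<m. \<omega> i * (norm (u n i - l i))\<^sup>2) \<longlonglongrightarrow> d"
    and "(\<lambda>n. \<Sum>i<m. \<omega> i * (norm (u n i - l' i))\<^sup>2) \<longlonglongrightarrow> d'"
    using conv conv' unfolding convergent_def by blast
  hence "cross \<longlonglongrightarrow> (d - d' - K) / 2"
    unfolding cross_eq[abs_def] by (intro tendsto_intros) simp_all
  then obtain c where c: "cross \<longlonglongrightarrow> c" by blast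
  have "(\<lambda>k. cross (g k)) \<longlonglongrightarrow> (\<Sum>i<m. \<omega> i * inner (l i) (l' i - l i))"
    using g(2) unfolding cross_def weakly_converges_def by (intro tendsto_sum tendsto_mult_left) auto
  moreover have "(\<lambda>k. cross (h k)) \<longlonglongrightarrow> (\<Sum>i<m. \<omega> i * inner (l' i) (l' i - l i))"
    using h(2) unfolding cross_def weakly_converges_def by (intro tendsto_sum tendsto_mult_left) auto
  ultimately have "(\<Sum>i<m. \<omega> i * inner (l i) (l' i - l i)) = c"
    and "(\<Sum>i<m. \<omega> i * inner (l' i) (l' i - l i)) = c"
    using LIMSEQ_subseq_LIMSEQ[OF c g(1)] LIMSEQ_subseq_LIMSEQ[OF c h(1)]
    by (simp_all add: o_def LIMSEQ_unique)
  hence "(\<Sum>i<m. \<omega> i * (norm (l' i - l i))\<^sup>2) = 0"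
    by (simp add: power2_norm_eq_inner inner_diff_left right_diff_distrib sum_subtractf)
  hence "\<forall>i\<in>{..<m}. \<omega> i * (norm (l' i - l i))\<^sup>2 = 0"
    using \<omega> by (subst (asm) sum_nonneg_eq_0_iff) (auto simp: less_imp_le)
  thus ?thesis using \<omega> by force
qed

section \<open>Maximally monotone operators and resolvents\<close>

lemma maximal_monotoneD:
  "maximal_monotone A \<Longrightarrow> u \<in> A x \<Longrightarrow> v \<in> A y \<Longrightarrow> 0 \<le> inner (x - y) (u - v)"
  unfolding maximal_monotone_def monotone_op_def by blast

lemma maximal_monotone_memI:
  "maximal_monotone A \<Longrightarrow> (\<And>y v. v \<in> A y \<Longrightarrow> 0 \<le> inner (x - y) (u - v)) \<Longrightarrow> u \<in> A x"
  unfolding maximal_monotone_def by blast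

lemma maximal_monotone_scale_op:
  assumes A: "maximal_monotone A" and c: "c > 0"
  shows "maximal_monotone (scale_op c A)"
  unfolding maximal_monotone_def monotone_op_def
proof (intro conjI allI impI)
  fix x y u v assume "u \<in> scale_op c A x" "v \<in> scale_op c A y"
  then obtain a b where "a \<in> A x" "b \<in> A y" "u = c *\<^sub>R a" "v = c *\<^sub>R b"
    unfolding scale_op_def by auto
  thus "0 \<le> inner (x - y) (u - v)"
    using maximal_monotoneD[OF A] c by (simp flip: scaleR_diff_right)
next
  fix x u assume mono: "\<forall>y v. v \<in> scale_op c A y \<longrightarrow> 0 \<le> inner (x - y) (u - v)"
  have "(1/c) *\<^sub>R u \<in> A x"
  proof (rule maximal_monotone_memI[OF A])
    fix y b assume "b \<in> A y"
    hence "0 \<le> inner (x - y) (u - c *\<^sub>R b)" using mono unfolding scale_op_def by blast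
    also have "inner (x - y) (u - c *\<^sub>R b) = c * inner (x - y) ((1/c) *\<^sub>R u - b)"
      using c by (simp add: inner_diff_right right_diff_distrib)
    finally show "0 \<le> inner (x - y) ((1/c) *\<^sub>R u - b)" using c by (simp add: zero_le_mult_iff)
  qed
  thus "u \<in> scale_op c A x" unfolding scale_op_def using c by (auto intro: rev_image_eqI)
qed

lemma maximal_monotone_translate:
  assumes A: "maximal_monotone A"
  shows "maximal_monotone (\<lambda>x. (\<lambda>a. a - w) ` A x)"
  unfolding maximal_monotone_def monotone_op_def
proof (intro conjI allI impI)
  fix x y u v assume "u \<in> (\<lambda>a. a - w) ` A x" "v \<in> (\<lambda>a. a - w) ` A y"
  thus "0 \<le> inner (x - y) (u - v)" using maximal_monotoneD[OF A] by auto
next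
  fix x u assume mono: "\<forall>y v. v \<in> (\<lambda>a. a - w) ` A y \<longrightarrow> 0 \<le> inner (x - y) (u - v)"
  have "u + w \<in> A x"
  proof (rule maximal_monotone_memI[OF A])
    fix y b assume "b \<in> A y"
    hence "0 \<le> inner (x - y) (u - (b - w))" using mono by blast
    thus "0 \<le> inner (x - y) (u + w - b)" by (simp add: algebra_simps)
  qed
  thus "u \<in> (\<lambda>a. a - w) ` A x" by (auto intro: image_eqI[of _ _ "u + w"])
qed

lemma nonneg_if_nonneg_add_mult:
  fixes K D :: real
  assumes "\<And>t. 0 < t \<Longrightarrow> t < 1 \<Longrightarrow> 0 \<le> K + t * D"
  shows "0 \<le> K"
proof (rule tendsto_lowerbound)
  show "((\<lambda>t. K + t * D) \<longlongrightarrow> K) (at_right 0)"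
    by (auto intro!: tendsto_eq_intros)
  show "\<forall>\<^sub>F t in at_right 0. 0 \<le> K + t * D"
    by (rule eventually_mono[OF eventually_at_right_real[of 0 1]]) (auto intro: assms)
qed simp

text \<open>For \<open>q\<close> in the graph of \<open>A\<close> these affine functions of \<open>p\<close> define the Fitzpatrick function
  \<open>\<Phi>\<^sub>A p = sup\<^sub>q fitzpatrick_aff q p\<close>, which is \<open>\<ge> \<langle>fst p, snd p\<rangle>\<close> everywhere with equality on the
  graph. Minimising \<open>\<Phi>\<^sub>A p + \<parallel>p\<parallel>\<^sup>2/2\<close>, whose epigraph is \<open>fitzpatrick_reg_epi A\<close>, yields Minty's
  theorem.\<close>

definition fitzpatrick_aff :: "'a::real_inner \<times> 'a \<Rightarrow> 'a \<times> 'a \<Rightarrow> real" where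
  "fitzpatrick_aff q p = inner (fst p) (snd q) + inner (fst q) (snd p) - inner (fst q) (snd q)"

definition fitzpatrick_reg_epi :: "('a::real_inner \<Rightarrow> 'a set) \<Rightarrow> 'a \<times> 'a \<Rightarrow> real \<Rightarrow> bool" where
  "fitzpatrick_reg_epi A p t \<longleftrightarrow> (\<forall>q. snd q \<in> A (fst q) \<longrightarrow> fitzpatrick_aff q p + (norm p)\<^sup>2 / 2 \<le> t)"

lemma fitzpatrick_aff_le_on_graph:
  assumes "maximal_monotone A" "snd q \<in> A (fst q)" "snd q' \<in> A (fst q')"
  shows "fitzpatrick_aff q' q \<le> inner (fst q) (snd q)"
  using maximal_monotoneD[OF assms] unfolding fitzpatrick_aff_def
  by (simp add: inner_diff inner_commute)

lemma fitzpatrick_aff_ge_inner: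
  assumes A: "maximal_monotone A"
  shows "\<exists>q. snd q \<in> A (fst q) \<and> inner (fst p) (snd p) \<le> fitzpatrick_aff q p"
proof (rule ccontr)
  assume "\<not> ?thesis"
  hence below: "fitzpatrick_aff q p < inner (fst p) (snd p)" if "snd q \<in> A (fst q)" for q
    using that by force
  have "snd p \<in> A (fst p)"
  proof (rule maximal_monotone_memI[OF A])
    fix y v assume "v \<in> A y"
    thus "0 \<le> inner (fst p - y) (snd p - v)"
      using below[of "(y, v)"] unfolding fitzpatrick_aff_def by (simp add: inner_diff inner_commute)
  qed
  thus False using below[of p] unfolding fitzpatrick_aff_def by simp
qed

lemma fitzpatrick_aff_combination:
  "fitzpatrick_aff q ((1 - t) *\<^sub>R p + t *\<^sub>R p') = (1 - t) * fitzpatrick_aff q p + t * fitzpatrick_aff q p'"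
  unfolding fitzpatrick_aff_def by (simp add: inner_add inner_diff algebra_simps)

lemma fitzpatrick_reg_epi_nonneg:
  assumes A: "maximal_monotone A" and epi: "fitzpatrick_reg_epi A p t"
  shows "0 \<le> t"
proof -
  obtain q where q: "snd q \<in> A (fst q)" "inner (fst p) (snd p) \<le> fitzpatrick_aff q p"
    using fitzpatrick_aff_ge_inner[OF A] by blast
  moreover have "fitzpatrick_aff q p + (norm p)\<^sup>2 / 2 \<le> t"
    using epi q(1) unfolding fitzpatrick_reg_epi_def by blast
  moreover have "inner (fst p) (snd p) + (norm p)\<^sup>2 / 2 = (norm (fst p + snd p))\<^sup>2 / 2"
    by (simp add: power2_norm_eq_inner inner_prod_def inner_add inner_commute field_simps)
  ultimately show ?thesis using zero_le_power2[of "norm (fst p + snd p)"] by linarith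
qed

lemma fitzpatrick_reg_epi_midpoint:
  assumes "fitzpatrick_reg_epi A p t" "fitzpatrick_reg_epi A p' t'"
  shows "fitzpatrick_reg_epi A ((1/2) *\<^sub>R (p + p')) ((t + t') / 2 - (1/8) * (norm (p - p'))\<^sup>2)"
  unfolding fitzpatrick_reg_epi_def
proof (intro allI impI)
  fix q assume "snd q \<in> A (fst q)"
  hence "fitzpatrick_aff q p + (norm p)\<^sup>2 / 2 \<le> t" "fitzpatrick_aff q p' + (norm p')\<^sup>2 / 2 \<le> t'"
    using assms unfolding fitzpatrick_reg_epi_def by blast+
  moreover have "fitzpatrick_aff q ((1/2) *\<^sub>R (p + p')) = fitzpatrick_aff q p / 2 + fitzpatrick_aff q p' / 2"
    using fitzpatrick_aff_combination[of q "1/2" p p'] by (simp add: scaleR_add_right)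
  ultimately show "fitzpatrick_aff q ((1/2) *\<^sub>R (p + p')) + (norm ((1/2) *\<^sub>R (p + p')))\<^sup>2 / 2
        \<le> (t + t') / 2 - (1/8) * (norm (p - p'))\<^sup>2"
    using norm_midpoint_sq[of p p'] unfolding add_divide_distrib diff_divide_distrib by linarith
qed

lemma fitzpatrick_reg_epi_closed:
  assumes "\<And>n. fitzpatrick_reg_epi A (ps n) (ts n)" "ps \<longlonglongrightarrow> p" "ts \<longlonglongrightarrow> t"
  shows "fitzpatrick_reg_epi A p t"
  unfolding fitzpatrick_reg_epi_def
proof (intro allI impI)
  fix q assume "snd q \<in> A (fst q)"
  have "(\<lambda>n. fitzpatrick_aff q (ps n) + (norm (ps n))\<^sup>2 / 2) \<longlonglongrightarrow> fitzpatrick_aff q p + (norm p)\<^sup>2 / 2"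
    unfolding fitzpatrick_aff_def by (intro tendsto_intros assms(2)) simp
  thus "fitzpatrick_aff q p + (norm p)\<^sup>2 / 2 \<le> t"
    using assms(1,3) \<open>snd q \<in> A (fst q)\<close> unfolding fitzpatrick_reg_epi_def by (meson LIMSEQ_le)
qed

context
  fixes A :: "'a::real_inner \<Rightarrow> 'a set" and p0 :: "'a \<times> 'a" and \<mu> :: real
  assumes A: "maximal_monotone A"
    and p0: "fitzpatrick_reg_epi A p0 \<mu>" and \<mu>_min: "\<And>p t. fitzpatrick_reg_epi A p t \<Longrightarrow> \<mu> \<le> t"
begin

lemma fitzpatrick_minimiser_variational_ineq:
  assumes q: "snd q \<in> A (fst q)"
  shows "0 \<le> inner (fst q) (snd q) - (\<mu> - (norm p0)\<^sup>2 / 2) + inner p0 (q - p0)"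
proof (rule nonneg_if_nonneg_add_mult)
  define F where "F = \<mu> - (norm p0)\<^sup>2 / 2"
  fix t :: real assume t: "0 < t" "t < 1"
  define pt where "pt = (1 - t) *\<^sub>R p0 + t *\<^sub>R q"
  have "pt = p0 + t *\<^sub>R (q - p0)" unfolding pt_def by (simp add: algebra_simps)
  hence norm_pt: "(norm pt)\<^sup>2 = (norm p0)\<^sup>2 + 2 * t * inner p0 (q - p0) + t\<^sup>2 * (norm (q - p0))\<^sup>2"
    by (simp only: norm_add_scaleR_sq)
  have "fitzpatrick_aff q' pt \<le> (1 - t) * F + t * inner (fst q) (snd q)"
    if "snd q' \<in> A (fst q')" for q'
  proof -
    have "(1 - t) * fitzpatrick_aff q' p0 \<le> (1 - t) * F"
      using p0 that t unfolding fitzpatrick_reg_epi_def F_def by (intro mult_left_mono) force+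
    moreover have "t * fitzpatrick_aff q' q \<le> t * inner (fst q) (snd q)"
      using fitzpatrick_aff_le_on_graph[OF A q that] t by (intro mult_left_mono) auto
    ultimately show ?thesis unfolding pt_def fitzpatrick_aff_combination by linarith
  qed
  hence "fitzpatrick_reg_epi A pt ((1 - t) * F + t * inner (fst q) (snd q) + (norm pt)\<^sup>2 / 2)"
    unfolding fitzpatrick_reg_epi_def by force
  from \<mu>_min[OF this]
  have "F + (norm p0)\<^sup>2 / 2 \<le> (1 - t) * F + t * inner (fst q) (snd q) + (norm pt)\<^sup>2 / 2"
    unfolding F_def by simp
  also note norm_pt
  finally have "0 \<le> t * inner (fst q) (snd q) - t * F + t * inner p0 (q - p0) + t\<^sup>2 * (norm (q - p0))\<^sup>2 / 2"
    unfolding left_diff_distrib mult.assoc add_divide_distrib mult_1 by linarith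
  also have "\<dots> = t * (inner (fst q) (snd q) - F + inner p0 (q - p0) + t * ((norm (q - p0))\<^sup>2 / 2))"
    by (simp add: algebra_simps power2_eq_square)
  finally show "0 \<le> inner (fst q) (snd q) - (\<mu> - (norm p0)\<^sup>2 / 2) + inner p0 (q - p0)
      + t * ((norm (q - p0))\<^sup>2 / 2)"
    using t unfolding F_def by (simp add: zero_le_mult_iff)
qed

lemma fitzpatrick_minimiser_antidiagonal: "snd p0 = - fst p0 \<and> snd p0 \<in> A (fst p0)"
proof -
  obtain x0 u0 where p0_eq: "p0 = (x0, u0)" by fastforce
  obtain q where "snd q \<in> A (fst q)" "inner x0 u0 \<le> fitzpatrick_aff q p0"
    using fitzpatrick_aff_ge_inner[OF A, of p0] p0_eq by auto
  hence F_ge: "inner x0 u0 \<le> \<mu> - (norm p0)\<^sup>2 / 2"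
    using p0 unfolding fitzpatrick_reg_epi_def by force
  have key: "(norm (x0 + u0))\<^sup>2 \<le> inner (u0 + y) (x0 + v)" if "v \<in> A y" for y v
  proof -
    have "0 \<le> inner y v - (\<mu> - (norm p0)\<^sup>2 / 2) + inner x0 (y - x0) + inner u0 (v - u0)"
      using fitzpatrick_minimiser_variational_ineq[of "(y, v)"] that p0_eq by (simp add: inner_prod_def)
    thus ?thesis using F_ge by (simp add: power2_norm_eq_inner inner_add inner_diff inner_commute)
  qed
  have "- x0 \<in> A (- u0)"
  proof (rule maximal_monotone_memI[OF A])
    fix y v assume "v \<in> A y"
    have "0 \<le> inner (u0 + y) (x0 + v)" using key[OF \<open>v \<in> A y\<close>] zero_le_power2 order_trans by blast
    also have "inner (u0 + y) (x0 + v) = inner (- u0 - y) (- x0 - v)"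
      by (simp add: inner_add inner_diff)
    finally show "0 \<le> inner (- u0 - y) (- x0 - v)" .
  qed
  with key[OF this] have "x0 + u0 = 0" by simp
  hence "u0 = - x0" by (simp add: add_eq_0_iff2 add.commute)
  thus ?thesis using \<open>- x0 \<in> A (- u0)\<close> p0_eq by simp
qed

end

lemma maximal_monotone_minty_zero:
  fixes A :: "'a::{real_inner,complete_space} \<Rightarrow> 'a set"
  assumes A: "maximal_monotone A"
  shows "\<exists>x. - x \<in> A x"
proof -
  obtain q0 where "snd q0 \<in> A (fst q0)" using fitzpatrick_aff_ge_inner[OF A] by blast
  hence "fitzpatrick_reg_epi A q0 (inner (fst q0) (snd q0) + (norm q0)\<^sup>2 / 2)"
    unfolding fitzpatrick_reg_epi_def using fitzpatrick_aff_le_on_graph[OF A] by force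
  hence "\<exists>p0 \<mu>. fitzpatrick_reg_epi A p0 \<mu> \<and> (\<forall>p t. fitzpatrick_reg_epi A p t \<longrightarrow> \<mu> \<le> t)"
    by (rule strongly_convex_epigraph_has_min[where Epi = "fitzpatrick_reg_epi A",
          OF _ fitzpatrick_reg_epi_nonneg[OF A] _ fitzpatrick_reg_epi_midpoint fitzpatrick_reg_epi_closed])
      simp_all
  then obtain p0 \<mu> where p0: "fitzpatrick_reg_epi A p0 \<mu>"
    and \<mu>_min: "\<And>p t. fitzpatrick_reg_epi A p t \<Longrightarrow> \<mu> \<le> t"
    by blast
  have "snd p0 = - fst p0 \<and> snd p0 \<in> A (fst p0)"
    by (rule fitzpatrick_minimiser_antidiagonal[OF A p0]) (rule \<mu>_min)
  hence "- fst p0 \<in> A (fst p0)" by metis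
  thus ?thesis by blast
qed

lemma maximal_monotone_minty:
  fixes A :: "'a::{real_inner,complete_space} \<Rightarrow> 'a set"
  assumes "maximal_monotone A"
  shows "\<exists>x. w - x \<in> A x"
proof -
  obtain x where "- x \<in> (\<lambda>a. a - w) ` A x"
    using maximal_monotone_minty_zero[OF maximal_monotone_translate[OF assms]] by blast
  hence "w - x \<in> A x" by (force simp: algebra_simps)
  thus ?thesis by blast
qed

lemma resolvent_eqI:
  assumes A: "maximal_monotone A" and p: "w - p \<in> A p"
  shows "resolvent A w = p"
  unfolding resolvent_def
proof (rule the_equality)
  fix p' assume "w - p' \<in> A p'"
  hence "0 \<le> inner (p' - p) ((w - p') - (w - p))" using maximal_monotoneD[OF A _ p] by blast
  hence "inner (p' - p) (p' - p) \<le> 0" by (simp add: inner_diff_right inner_commute)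
  thus "p' = p" by (metis antisym inner_eq_zero_iff inner_ge_zero eq_iff_diff_eq_0)
qed (fact p)

lemma resolvent_mem:
  fixes A :: "'a::{real_inner,complete_space} \<Rightarrow> 'a set"
  assumes "maximal_monotone A"
  shows "w - resolvent A w \<in> A (resolvent A w)"
  using maximal_monotone_minty[OF assms] resolvent_eqI[OF assms] by metis

lemma resolvent_scale_op_mem:
  fixes A :: "'a::{real_inner,complete_space} \<Rightarrow> 'a set"
  assumes A: "maximal_monotone A" and c: "c > 0"
  shows "(1 / c) *\<^sub>R (w - resolvent (scale_op c A) w) \<in> A (resolvent (scale_op c A) w)"
  using resolvent_mem[OF maximal_monotone_scale_op[OF A c], of w] c
  unfolding scale_op_def by auto

lemma inner_le_young:
  fixes u v :: "'a::real_inner"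
  assumes b: "b > 0"
  shows "2 * inner u v \<le> (norm u)\<^sup>2 / (2 * b) + 2 * b * (norm v)\<^sup>2"
proof -
  have "0 \<le> (norm (u + (- (2 * b)) *\<^sub>R v))\<^sup>2" by simp
  hence "2 * b * (2 * inner u v) \<le> 2 * b * ((norm u)\<^sup>2 / (2 * b) + 2 * b * (norm v)\<^sup>2)"
    unfolding norm_add_scaleR_sq using b by (simp add: algebra_simps power2_eq_square)
  thus ?thesis using b by simp
qed

lemma inner_le_lipschitz:
  fixes u v w :: "'a::real_inner"
  assumes "norm v \<le> L * norm w" "L \<ge> 0"
  shows "2 * inner u v \<le> L * ((norm u)\<^sup>2 + (norm w)\<^sup>2)"
proof -
  have "inner u v \<le> norm u * (L * norm w)"
    using norm_cauchy_schwarz[of u v] assms(1) by (meson mult_left_mono norm_ge_zero order_trans)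
  hence "2 * inner u v \<le> L * (2 * (norm u * norm w))" by (simp add: algebra_simps)
  also have "\<dots> \<le> L * ((norm u)\<^sup>2 + (norm w)\<^sup>2)"
    using sum_squares_bound[of "norm u" "norm w"] assms(2) by (intro mult_left_mono) simp_all
  finally show ?thesis .
qed

lemma norm_diff_sq_le: "(norm (u - v))\<^sup>2 \<le> 2 * (norm u)\<^sup>2 + 2 * (norm v)\<^sup>2"
  for u v :: "'a::real_inner"
  using zero_le_power2[of "norm (u + v)"]
  by (simp add: power2_norm_eq_inner inner_add inner_diff inner_commute)

lemma norm_add_sq_le_of_inner_nonneg:
  fixes p r e G :: "'a::real_inner"
  assumes "0 \<le> inner (p + r) (p - (e + r) - g *\<^sub>R G)"
  shows "(norm (e + r))\<^sup>2 \<le> (norm e)\<^sup>2 - (norm r)\<^sup>2 + 2 * inner p (p - e) - 2 * g * inner (p + r) G"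
  using assms by (simp add: power2_norm_eq_inner inner_add inner_diff inner_commute algebra_simps)

lemma weighted_variance_eq:
  fixes a :: "nat \<Rightarrow> 'a::real_inner"
  assumes "(\<Sum>i\<in>I. w i) = 1"
  shows "(\<Sum>i\<in>I. w i * (norm (a i - (\<Sum>j\<in>I. w j *\<^sub>R a j)))\<^sup>2)
       = (\<Sum>i\<in>I. w i * (norm (a i))\<^sup>2) - (norm (\<Sum>j\<in>I. w j *\<^sub>R a j))\<^sup>2"
proof -
  define P where "P = (\<Sum>j\<in>I. w j *\<^sub>R a j)"
  have "w i * (norm (a i - P))\<^sup>2 = w i * (norm (a i))\<^sup>2 - 2 * inner (w i *\<^sub>R a i) P + w i * (norm P)\<^sup>2" for i
    by (simp add: power2_norm_eq_inner inner_diff inner_commute algebra_simps)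
  hence "(\<Sum>i\<in>I. w i * (norm (a i - P))\<^sup>2)
      = (\<Sum>i\<in>I. w i * (norm (a i))\<^sup>2) - 2 * inner P P + (\<Sum>i\<in>I. w i) * (norm P)\<^sup>2"
    unfolding P_def
    by (simp add: sum.distrib sum_subtractf sum_distrib_left sum_distrib_right inner_sum_left)
  thus ?thesis using assms unfolding P_def by (simp add: power2_norm_eq_inner)
qed

lemma weighted_deviation_sum_eq_0:
  fixes a :: "nat \<Rightarrow> 'a::real_inner"
  assumes "(\<Sum>i\<in>I. w i) = 1"
  shows "(\<Sum>i\<in>I. w i * inner b (a i - (\<Sum>j\<in>I. w j *\<^sub>R a j))) = 0"
  using assms
  by (simp add: inner_diff_right algebra_simps sum_subtractf inner_sum_right flip: sum_distrib_right)

context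
  fixes I :: "nat set" and w :: "nat \<Rightarrow> real"
  assumes w_sum: "(\<Sum>i\<in>I. w i) = 1" and w_nonneg: "\<And>i. i \<in> I \<Longrightarrow> w i \<ge> 0"
begin

lemma weighted_variance_le:
  fixes a :: "nat \<Rightarrow> 'a::real_inner"
  shows "(\<Sum>i\<in>I. w i * (norm (a i - (\<Sum>j\<in>I. w j *\<^sub>R a j)))\<^sup>2) \<le> (\<Sum>i\<in>I. w i * (norm (a i))\<^sup>2)"
  using weighted_variance_eq[OF w_sum, of a] by simp

lemma norm_weighted_mean_sq_le:
  fixes a :: "nat \<Rightarrow> 'a::real_inner"
  shows "(norm (\<Sum>j\<in>I. w j *\<^sub>R a j))\<^sup>2 \<le> (\<Sum>i\<in>I. w i * (norm (a i))\<^sup>2)"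
proof -
  have "0 \<le> (\<Sum>i\<in>I. w i * (norm (a i - (\<Sum>j\<in>I. w j *\<^sub>R a j)))\<^sup>2)"
    using w_nonneg by (intro sum_nonneg) simp
  thus ?thesis using weighted_variance_eq[OF w_sum, of a] by simp
qed

lemma weighted_mean_plus_deviation_sq_le:
  fixes a b :: "nat \<Rightarrow> 'a::real_inner"
  shows "(\<Sum>i\<in>I. w i * (norm ((\<Sum>j\<in>I. w j *\<^sub>R a j) + (b i - (\<Sum>j\<in>I. w j *\<^sub>R b j))))\<^sup>2)
     \<le> (\<Sum>i\<in>I. w i * (norm (a i))\<^sup>2) + (\<Sum>i\<in>I. w i * (norm (b i))\<^sup>2)"
proof -
  define Pa where "Pa = (\<Sum>j\<in>I. w j *\<^sub>R a j)"
  define Pb where "Pb = (\<Sum>j\<in>I. w j *\<^sub>R b j)"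
  have "w i * (norm (Pa + (b i - Pb)))\<^sup>2
      = w i * (norm Pa)\<^sup>2 + 2 * (w i * inner Pa (b i - Pb)) + w i * (norm (b i - Pb))\<^sup>2" for i
    by (simp add: power2_norm_eq_inner inner_add inner_commute algebra_simps)
  hence "(\<Sum>i\<in>I. w i * (norm (Pa + (b i - Pb)))\<^sup>2)
      = (\<Sum>i\<in>I. w i) * (norm Pa)\<^sup>2 + 2 * (\<Sum>i\<in>I. w i * inner Pa (b i - Pb))
        + (\<Sum>i\<in>I. w i * (norm (b i - Pb))\<^sup>2)"
    by (simp add: sum.distrib sum_distrib_left sum_distrib_right)
  also have "(\<Sum>i\<in>I. w i * inner Pa (b i - Pb)) = 0"
    unfolding Pb_def by (rule weighted_deviation_sum_eq_0[OF w_sum])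
  finally show ?thesis
    using norm_weighted_mean_sq_le[of a] weighted_variance_le[of b] w_sum
    unfolding Pa_def Pb_def by simp
qed

lemma weighted_diff_deviation_sq_le:
  fixes u b :: "nat \<Rightarrow> 'a::real_inner"
  shows "(\<Sum>i\<in>I. w i * (norm (u i - (b i - (\<Sum>j\<in>I. w j *\<^sub>R b j))))\<^sup>2)
     \<le> 2 * (\<Sum>i\<in>I. w i * (norm (u i))\<^sup>2) + 2 * (\<Sum>i\<in>I. w i * (norm (b i))\<^sup>2)"
proof -
  define Pb where "Pb = (\<Sum>j\<in>I. w j *\<^sub>R b j)"
  have "(\<Sum>i\<in>I. w i * (norm (u i - (b i - Pb)))\<^sup>2)
      \<le> (\<Sum>i\<in>I. w i * (2 * (norm (u i))\<^sup>2 + 2 * (norm (b i - Pb))\<^sup>2))"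
    using w_nonneg norm_diff_sq_le by (intro sum_mono mult_left_mono) auto
  also have "\<dots> = 2 * (\<Sum>i\<in>I. w i * (norm (u i))\<^sup>2) + 2 * (\<Sum>i\<in>I. w i * (norm (b i - Pb))\<^sup>2)"
    by (simp add: sum.distrib sum_distrib_left algebra_simps)
  finally show ?thesis using weighted_variance_le[of b] unfolding Pb_def by linarith
qed

end

lemma inner_tendsto_zero_if_bounded:
  fixes a b :: "nat \<Rightarrow> 'a::real_inner"
  assumes "\<And>n. norm (a n) \<le> K" "b \<longlonglongrightarrow> 0"
  shows "(\<lambda>n. inner (a n) (b n)) \<longlonglongrightarrow> 0"
proof (rule tendsto_0_le[OF assms(2), of _ K])
  have "norm (inner (a n) (b n)) \<le> norm (b n) * K" for n
    using Cauchy_Schwarz_ineq2[of "a n" "b n"] assms(1)[of n]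
    by (metis mult.commute mult_right_mono norm_ge_zero order_trans real_norm_def)
  thus "\<forall>\<^sub>F n in sequentially. norm (inner (a n) (b n)) \<le> norm (b n) * K" by simp
qed

lemma inner_perturbation_tendsto_zero:
  fixes a b r e :: "nat \<Rightarrow> 'a::real_inner"
  assumes "\<And>n. norm (a n) \<le> K" "\<And>n. norm (b n) \<le> K" "r \<longlonglongrightarrow> 0" "e \<longlonglongrightarrow> 0"
  shows "(\<lambda>n. inner (a n + r n) (b n + e n) - inner (a n) (b n)) \<longlonglongrightarrow> 0"
proof -
  have "(\<lambda>n. inner (a n) (e n)) \<longlonglongrightarrow> 0" "(\<lambda>n. inner (b n) (r n)) \<longlonglongrightarrow> 0"
    by (rule inner_tendsto_zero_if_bounded[OF assms(1) assms(4)],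
        rule inner_tendsto_zero_if_bounded[OF assms(2) assms(3)])
  moreover have "(\<lambda>n. inner (r n) (e n)) \<longlonglongrightarrow> 0" using tendsto_inner[OF assms(3,4)] by simp
  ultimately have "(\<lambda>n. inner (a n) (e n) + inner (b n) (r n) + inner (r n) (e n)) \<longlonglongrightarrow> 0 + 0 + 0"
    by (intro tendsto_add)
  thus ?thesis by (simp add: inner_add inner_commute add_ac)
qed

lemma tendsto_zero_if_scaled_sq_le:
  fixes v :: "nat \<Rightarrow> 'a::real_normed_vector"
  assumes w: "w > 0" and Q: "Q \<longlonglongrightarrow> 0" and le: "\<And>n. w * (norm (v n))\<^sup>2 \<le> Q n"
  shows "v \<longlonglongrightarrow> 0"
proof -
  have "(\<lambda>n. (norm (v n))\<^sup>2) \<longlonglongrightarrow> 0"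
  proof (rule tendsto_sandwich[of "\<lambda>n. 0" _ _ "\<lambda>n. Q n / w"])
    show "\<forall>\<^sub>F n in sequentially. (norm (v n))\<^sup>2 \<le> Q n / w"
      using le w by (simp add: le_divide_eq mult.commute)
    show "(\<lambda>n. Q n / w) \<longlonglongrightarrow> 0" using tendsto_divide_zero[OF Q] by simp
  qed simp_all
  hence "(\<lambda>n. sqrt ((norm (v n))\<^sup>2)) \<longlonglongrightarrow> sqrt 0" by (rule tendsto_real_sqrt)
  thus ?thesis by (simp add: tendsto_norm_zero_iff)
qed

lemma norm_le_if_scaled_sq_le:
  fixes v :: "'a::real_normed_vector"
  assumes "w > 0" "w * (norm v)\<^sup>2 \<le> D"
  shows "norm v \<le> sqrt (D / w)"
  using assms by (intro real_le_rsqrt) (simp add: le_divide_eq mult.commute)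

lemma cocoercive_lipschitz:
  assumes "cocoercive \<beta> C" "\<beta> > 0"
  shows "norm (C u - C v) \<le> (1 / \<beta>) * norm (u - v)"
proof -
  have "\<beta> * (norm (C u - C v))\<^sup>2 \<le> norm (u - v) * norm (C u - C v)"
    using assms(1) norm_cauchy_schwarz[of "u - v" "C u - C v"] unfolding cocoercive_def
    by (meson order_trans)
  hence "\<beta> * norm (C u - C v) \<le> norm (u - v)"
    by (cases "C u = C v") (auto simp: power2_eq_square mult.assoc)
  thus ?thesis using assms(2) by (simp add: field_simps)
qed

lemma reflected_forward_estimate:
  fixes a b c xs :: "'a::real_inner" and B C :: "'a \<Rightarrow> 'a"
  assumes mono: "0 \<le> inner (a - xs) (B a - B xs)"
    and lip: "norm (B b - B c) \<le> L * norm (b - c)"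
    and coc: "\<beta> * (norm (C b - C xs))\<^sup>2 \<le> inner (b - xs) (C b - C xs)"
    and \<gamma>: "\<gamma> > 0" and \<beta>: "\<beta> > 0" and L: "L \<ge> 0"
  shows "- 2 * \<gamma> * inner (a - xs) (2 *\<^sub>R B b - B c + C b - (B xs + C xs))
    \<le> 2 * \<gamma> * inner (a - xs) (B a - B b) - 2 * \<gamma> * inner (b - xs) (B b - B c)
      + (\<gamma> * L + \<gamma> / (2 * \<beta>)) * (norm (a - b))\<^sup>2 + \<gamma> * L * (norm (b - c))\<^sup>2"
proof -
  have split: "inner (a - xs) (2 *\<^sub>R B b - B c + C b - (B xs + C xs))
      = inner (a - xs) (B a - B xs) - inner (a - xs) (B a - B b)
        + inner (b - xs) (B b - B c) - inner (b - a) (B b - B c)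
        + inner (b - xs) (C b - C xs) - inner (b - a) (C b - C xs)"
    by (simp add: inner_diff inner_add scaleR_2 algebra_simps)
  have "2 * inner (b - a) (B b - B c) \<le> L * ((norm (a - b))\<^sup>2 + (norm (b - c))\<^sup>2)"
    using inner_le_lipschitz[OF lip L, of "b - a"] by (simp add: norm_minus_commute)
  moreover have "2 * inner (b - a) (C b - C xs) \<le> (norm (a - b))\<^sup>2 / (2 * \<beta>) + 2 * \<beta> * (norm (C b - C xs))\<^sup>2"
    using inner_le_young[OF \<beta>, of "b - a"] by (simp add: norm_minus_commute)
  ultimately have "2 * inner (b - a) (B b - B c) + 2 * inner (b - a) (C b - C xs)
      - 2 * inner (a - xs) (B a - B xs) - 2 * inner (b - xs) (C b - C xs)
    \<le> (L + 1 / (2 * \<beta>)) * (norm (a - b))\<^sup>2 + L * (norm (b - c))\<^sup>2"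
    using mono coc by (simp add: algebra_simps)
  from mult_left_mono[OF this, of \<gamma>] \<gamma> show ?thesis
    unfolding split by (simp add: algebra_simps)
qed

lemma weighted_coupling_eq:
  fixes v p q :: "nat \<Rightarrow> 'a::real_inner"
  assumes "(\<Sum>i<m. \<omega> i) = 1"
  defines "V \<equiv> \<Sum>j<m. \<omega> j *\<^sub>R v j"
  shows "(\<Sum>i<m. inner (V - p i) ((\<omega> i / \<gamma>) *\<^sub>R (V - v i) - q i))
       = (\<Sum>i<m. inner (p i) (q i) - inner V (q i) - (\<omega> i / \<gamma>) * (inner V (p i) - inner (v i) (p i)))"
proof -
  have "(\<Sum>i<m. \<omega> i *\<^sub>R (V - v i)) = (\<Sum>i<m. \<omega> i) *\<^sub>R V - V"
    unfolding V_def by (simp add: scaleR_diff_right sum_subtractf scaleR_sum_left)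
  hence "(\<Sum>i<m. \<omega> i *\<^sub>R (V - v i)) = 0" using assms(1) by simp
  moreover have "(\<Sum>i<m. (\<omega> i / \<gamma>) * inner V (V - v i)) = inner V (\<Sum>i<m. \<omega> i *\<^sub>R (V - v i)) / \<gamma>"
    by (simp add: inner_sum_right sum_divide_distrib)
  ultimately have quadratic: "(\<Sum>i<m. (\<omega> i / \<gamma>) * inner V (V - v i)) = 0" by simp
  have "inner (V - p i) ((\<omega> i / \<gamma>) *\<^sub>R (V - v i) - q i) = (\<omega> i / \<gamma>) * inner V (V - v i)
      + (inner (p i) (q i) - inner V (q i) - (\<omega> i / \<gamma>) * (inner V (p i) - inner (v i) (p i)))" for i
    by (simp add: inner_diff inner_commute algebra_simps)
  thus ?thesis using quadratic by (simp add: sum.distrib)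
qed

text \<open>The quadratic part of the coupling sum vanishes identically, which makes the sum weakly
  sequentially continuous.\<close>

lemma weighted_coupling_tendsto:
  fixes u :: "nat \<Rightarrow> nat \<Rightarrow> 'a::real_inner"
  assumes \<omega>: "(\<Sum>i<m. \<omega> i) = 1" and wc: "\<forall>i<m. weakly_converges (\<lambda>k. u k i) (l i)"
  shows "(\<lambda>k. \<Sum>i<m. inner ((\<Sum>j<m. \<omega> j *\<^sub>R u k j) - p i) ((\<omega> i / \<gamma>) *\<^sub>R ((\<Sum>j<m. \<omega> j *\<^sub>R u k j) - u k i) - q i))
    \<longlonglongrightarrow> (\<Sum>i<m. inner ((\<Sum>j<m. \<omega> j *\<^sub>R l j) - p i) ((\<omega> i / \<gamma>) *\<^sub>R ((\<Sum>j<m. \<omega> j *\<^sub>R l j) - l i) - q i))"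
proof -
  have "weakly_converges (\<lambda>k. \<Sum>j<m. \<omega> j *\<^sub>R u k j) (\<Sum>j<m. \<omega> j *\<^sub>R l j)"
    using wc by (intro weakly_converges_sum) simp
  hence mean: "(\<lambda>k. inner (\<Sum>j<m. \<omega> j *\<^sub>R u k j) w) \<longlonglongrightarrow> inner (\<Sum>j<m. \<omega> j *\<^sub>R l j) w" for w
    unfolding weakly_converges_def by blast
  have comp: "(\<lambda>k. inner (u k i) w) \<longlonglongrightarrow> inner (l i) w" if "i \<in> {..<m}" for i w
    using wc that unfolding weakly_converges_def by simp
  show ?thesis
    unfolding weighted_coupling_eq[OF \<omega>]
    by (intro tendsto_sum tendsto_diff tendsto_const tendsto_mult_left mean comp)
qed

lemma inner_le_neg_sq_of_lipschitz_perturbation: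
  fixes v d D :: "'a::real_inner"
  assumes v: "v = t *\<^sub>R d" and D: "norm D \<le> K * norm v" and t: "t > 0" and s: "0 \<le> s" "s \<le> 1"
    and K: "t * K \<le> 1/2"
  shows "inner v (s *\<^sub>R D - d) \<le> - (t / 2) * (norm d)\<^sup>2"
proof -
  have "s * inner d D \<le> s * (norm d * norm D)"
    using norm_cauchy_schwarz[of d D] s(1) by (rule mult_left_mono)
  also have "\<dots> \<le> norm d * norm D"
    using s by (intro mult_left_le_one_le) simp_all
  also have "\<dots> \<le> norm d * (K * (t * norm d))"
    using D v t by (intro mult_left_mono) simp_all
  also have "\<dots> = (t * K) * (norm d)\<^sup>2" by (simp add: power2_eq_square algebra_simps)
  also have "\<dots> \<le> (1/2) * (norm d)\<^sup>2" using K by (rule mult_right_mono) simp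
  finally have "t * (s * inner d D) \<le> t * ((1/2) * (norm d)\<^sup>2)" using t by simp
  thus ?thesis unfolding v by (simp add: inner_diff_right power2_norm_eq_inner algebra_simps)
qed

section \<open>The splitting iteration\<close>

locale splitting_iteration =
  fixes A :: "nat \<Rightarrow> 'a::{real_inner, complete_space} \<Rightarrow> 'a set"
    and B C :: "'a \<Rightarrow> 'a"
    and m :: nat and L \<beta> \<gamma> :: real and \<omega> :: "nat \<Rightarrow> real"
    and x :: "nat \<Rightarrow> 'a" and z :: "nat \<Rightarrow> nat \<Rightarrow> 'a" and y :: "int \<Rightarrow> nat \<Rightarrow> 'a"
  assumes A: "\<And>i. i < m \<Longrightarrow> maximal_monotone (A i)"
    and L: "L > 0" and B_mono: "monotone_fun B" and B_lipschitz: "L-lipschitz_on UNIV B"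
    and \<beta>: "\<beta> > 0" and C_cocoercive: "cocoercive \<beta> C"
    and \<omega>: "\<And>i. i < m \<Longrightarrow> 0 < \<omega> i \<and> \<omega> i \<le> 1"
    and \<omega>_sum: "(\<Sum>i<m. \<omega> i) = 1"
    and \<gamma>: "0 < \<gamma>" "\<gamma> < \<beta> / (2 * (1 + 4 * \<beta> * L))"
    and x_rec: "\<And>n. x (Suc n) = (\<Sum>j<m. \<omega> j *\<^sub>R z n j)"
    and y_rec: "\<And>n i. i < m \<Longrightarrow> y (int n + 1) i =
        resolvent (scale_op (\<gamma> / \<omega> i) (A i))
          (2 *\<^sub>R x (Suc n) - z n i - (2 * \<gamma>) *\<^sub>R B (y (int n) i)
           + \<gamma> *\<^sub>R B (y (int n - 1) i) - \<gamma> *\<^sub>R C (y (int n) i))"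
    and z_rec: "\<And>n i. i < m \<Longrightarrow> z (Suc n) i = z n i + y (int n + 1) i - x (Suc n)"
begin

text \<open>The resolvent step producing \<open>Y (n + 2)\<close> is the first one that involves no iterate with
  negative index (the one producing \<open>Y 1\<close> uses the arbitrary \<open>y (-1)\<close>), so most statements
  below are shifted by one or two steps.\<close>

definition Y :: "nat \<Rightarrow> nat \<Rightarrow> 'a" where "Y n i = y (int n) i"
definition X :: "nat \<Rightarrow> 'a" where "X n = x (Suc n)"
definition stepsize :: "nat \<Rightarrow> real" where "stepsize i = \<gamma> / \<omega> i"
definition forward :: "nat \<Rightarrow> nat \<Rightarrow> 'a" where
  "forward n i = 2 *\<^sub>R B (Y (Suc n) i) - B (Y n i) + C (Y (Suc n) i)"

definition a_res :: "nat \<Rightarrow> nat \<Rightarrow> 'a" where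
  "a_res n i = (1 / stepsize i) *\<^sub>R (2 *\<^sub>R X (Suc n) - z (Suc n) i - \<gamma> *\<^sub>R forward n i - Y (Suc (Suc n)) i)"

lemma \<omega>_pos: "i < m \<Longrightarrow> \<omega> i > 0" and \<omega>_le_1: "i < m \<Longrightarrow> \<omega> i \<le> 1"
  using \<omega> by blast+

lemma \<omega>_nonneg: "i \<in> {..<m} \<Longrightarrow> \<omega> i \<ge> 0"
  using \<omega> by (simp add: less_imp_le)

lemma stepsize_pos: "i < m \<Longrightarrow> stepsize i > 0"
  unfolding stepsize_def using \<omega>_pos \<gamma> by (simp add: divide_pos_pos)

lemma \<omega>_stepsize: "i < m \<Longrightarrow> \<omega> i * stepsize i = \<gamma>"
  unfolding stepsize_def using \<omega>_pos by (simp add: less_imp_neq[symmetric])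

lemma B_lipschitz': "norm (B u - B v) \<le> L * norm (u - v)"
  using lipschitz_onD[OF B_lipschitz] by (simp add: dist_norm)

lemma B_mono': "0 \<le> inner (u - v) (B u - B v)"
  using B_mono unfolding monotone_fun_def by blast

lemma C_cocoercive': "\<beta> * (norm (C u - C v))\<^sup>2 \<le> inner (u - v) (C u - C v)"
  using C_cocoercive unfolding cocoercive_def by blast

lemma C_mono': "0 \<le> inner (u - v) (C u - C v)"
  using C_cocoercive'[of u v] \<beta> zero_le_power2[of "norm (C u - C v)"]
  by (meson mult_nonneg_nonneg order_trans less_imp_le)

lemma B_plus_C_lipschitz: "norm ((B u + C u) - (B v + C v)) \<le> (L + 1 / \<beta>) * norm (u - v)"
proof -
  have "norm ((B u + C u) - (B v + C v)) \<le> norm (B u - B v) + norm (C u - C v)"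
    by (metis add_diff_add norm_triangle_ineq)
  also have "\<dots> \<le> L * norm (u - v) + (1 / \<beta>) * norm (u - v)"
    using B_lipschitz' cocoercive_lipschitz[OF C_cocoercive \<beta>] by (intro add_mono)
  finally show ?thesis by (simp add: algebra_simps)
qed

lemma X_eq: "X n = (\<Sum>j<m. \<omega> j *\<^sub>R z n j)"
  unfolding X_def by (rule x_rec)

lemma Y_Suc: "i < m \<Longrightarrow> Y (Suc n) i = X n + (z (Suc n) i - z n i)"
  unfolding Y_def X_def using z_rec[of i n] by (simp add: algebra_simps)

lemma a_res_mem:
  assumes i: "i < m"
  shows "a_res n i \<in> A i (Y (Suc (Suc n)) i)"
proof -
  have "Y (Suc (Suc n)) i = y (int (Suc n) + 1) i" unfolding Y_def by (simp add: add_ac)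
  also have "\<dots> = resolvent (scale_op (stepsize i) (A i))
      (2 *\<^sub>R x (Suc (Suc n)) - z (Suc n) i - (2 * \<gamma>) *\<^sub>R B (y (int (Suc n)) i)
        + \<gamma> *\<^sub>R B (y (int (Suc n) - 1) i) - \<gamma> *\<^sub>R C (y (int (Suc n)) i))"
    unfolding stepsize_def by (rule y_rec[OF i])
  also have "2 *\<^sub>R x (Suc (Suc n)) - z (Suc n) i - (2 * \<gamma>) *\<^sub>R B (y (int (Suc n)) i)
        + \<gamma> *\<^sub>R B (y (int (Suc n) - 1) i) - \<gamma> *\<^sub>R C (y (int (Suc n)) i)
      = 2 *\<^sub>R X (Suc n) - z (Suc n) i - \<gamma> *\<^sub>R forward n i"
    unfolding X_def forward_def Y_def by (simp add: algebra_simps)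
  finally show ?thesis
    unfolding a_res_def using resolvent_scale_op_mem[OF A[OF i] stepsize_pos[OF i]] by simp
qed

lemma stepsize_a_res:
  assumes i: "i < m"
  shows "stepsize i *\<^sub>R a_res n i = X (Suc n) - z (Suc (Suc n)) i - \<gamma> *\<^sub>R forward n i"
  unfolding a_res_def using stepsize_pos[OF i] Y_Suc[OF i, of "Suc n"]
  by (simp add: algebra_simps scaleR_2)

definition solution :: "'a \<Rightarrow> (nat \<Rightarrow> 'a) \<Rightarrow> bool" where
  "solution xs as \<longleftrightarrow> (\<forall>i<m. as i \<in> A i xs) \<and> (\<Sum>i<m. as i) + B xs + C xs = 0"

text \<open>\<open>z_fixed xs as\<close> is the fixed point of the \<open>z\<close>-update that belongs to the solution
  \<open>(xs, as)\<close>.\<close>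

definition z_fixed :: "'a \<Rightarrow> (nat \<Rightarrow> 'a) \<Rightarrow> nat \<Rightarrow> 'a" where
  "z_fixed xs as i = xs - stepsize i *\<^sub>R as i - \<gamma> *\<^sub>R (B xs + C xs)"

lemma zer_sum_iff_solution: "xs \<in> zer_sum m A B C \<longleftrightarrow> (\<exists>as. solution xs as)"
  unfolding zer_sum_def solution_def by blast

lemma z_fixed_mean:
  assumes "solution xs as"
  shows "(\<Sum>i<m. \<omega> i *\<^sub>R z_fixed xs as i) = xs"
proof -
  have "(\<Sum>i<m. \<omega> i *\<^sub>R z_fixed xs as i)
      = (\<Sum>i<m. \<omega> i *\<^sub>R xs - \<gamma> *\<^sub>R as i - \<omega> i *\<^sub>R (\<gamma> *\<^sub>R (B xs + C xs)))"
    by (rule sum.cong) (auto simp: z_fixed_def scaleR_diff_right \<omega>_stepsize)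
  also have "\<dots> = (\<Sum>i<m. \<omega> i) *\<^sub>R xs - \<gamma> *\<^sub>R (\<Sum>i<m. as i)
      - ((\<Sum>i<m. \<omega> i) * \<gamma>) *\<^sub>R (B xs + C xs)"
    by (simp add: sum_subtractf scaleR_sum_left scaleR_sum_right sum_distrib_right)
  also have "\<dots> = xs - \<gamma> *\<^sub>R ((\<Sum>i<m. as i) + B xs + C xs)"
    using \<omega>_sum by (simp add: scaleR_add_right algebra_simps)
  finally show ?thesis using assms unfolding solution_def by simp
qed

definition z_dist :: "(nat \<Rightarrow> 'a) \<Rightarrow> nat \<Rightarrow> real" where
  "z_dist zs n = (\<Sum>i<m. \<omega> i * (norm (z n i - zs i))\<^sup>2)"

definition z_incr :: "nat \<Rightarrow> real" where
  "z_incr n = (\<Sum>i<m. \<omega> i * (norm (z (Suc n) i - z n i))\<^sup>2)"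

definition y_incr :: "nat \<Rightarrow> real" where
  "y_incr n = (\<Sum>i<m. \<omega> i * (norm (Y (Suc n) i - Y n i))\<^sup>2)"

definition Phi :: "'a \<Rightarrow> nat \<Rightarrow> real" where
  "Phi xs n = (\<Sum>i<m. \<omega> i * (2 * \<gamma> * inner (Y (Suc n) i - xs) (B (Y (Suc n) i) - B (Y n i))))"

lemma weighted_component_le: "i < m \<Longrightarrow> \<omega> i * (norm (v i))\<^sup>2 \<le> (\<Sum>j<m. \<omega> j * (norm (v j))\<^sup>2)"
  by (rule member_le_sum) (use \<omega>_nonneg in auto)

lemma z_dist_component_step:
  fixes n :: nat
  assumes i: "i < m" and sol: "solution xs as"
  defines "zs \<equiv> z_fixed xs as" and "p \<equiv> X (Suc n) - xs"
  shows "(norm (z (Suc (Suc n)) i - zs i))\<^sup>2 \<le> (norm (z (Suc n) i - zs i))\<^sup>2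
      - (norm (z (Suc (Suc n)) i - z (Suc n) i))\<^sup>2 + 2 * inner p (p - (z (Suc n) i - zs i))
      + 2 * \<gamma> * inner (Y (Suc (Suc n)) i - xs) (B (Y (Suc (Suc n)) i) - B (Y (Suc n) i))
      - 2 * \<gamma> * inner (Y (Suc n) i - xs) (B (Y (Suc n) i) - B (Y n i))
      + (\<gamma> * L + \<gamma> / (2 * \<beta>)) * (norm (Y (Suc (Suc n)) i - Y (Suc n) i))\<^sup>2
      + \<gamma> * L * (norm (Y (Suc n) i - Y n i))\<^sup>2"
proof -
  define e where "e = z (Suc n) i - zs i"
  define r where "r = z (Suc (Suc n)) i - z (Suc n) i"
  have pr: "p + r = Y (Suc (Suc n)) i - xs"
    unfolding p_def r_def using Y_Suc[OF i, of "Suc n"] by (simp add: algebra_simps)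
  have "p - (e + r) - \<gamma> *\<^sub>R (forward n i - (B xs + C xs)) = stepsize i *\<^sub>R (a_res n i - as i)"
    unfolding scaleR_diff_right stepsize_a_res[OF i] p_def e_def r_def zs_def z_fixed_def
    by (simp add: algebra_simps)
  moreover have "0 \<le> inner (Y (Suc (Suc n)) i - xs) (a_res n i - as i)"
    using maximal_monotoneD[OF A[OF i] a_res_mem[OF i]] sol i unfolding solution_def by blast
  ultimately have "0 \<le> inner (p + r) (p - (e + r) - \<gamma> *\<^sub>R (forward n i - (B xs + C xs)))"
    unfolding pr using stepsize_pos[OF i] by simp
  from norm_add_sq_le_of_inner_nonneg[OF this]
  have "(norm (z (Suc (Suc n)) i - zs i))\<^sup>2 \<le> (norm e)\<^sup>2 - (norm r)\<^sup>2 + 2 * inner p (p - e)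
      - 2 * \<gamma> * inner (Y (Suc (Suc n)) i - xs) (forward n i - (B xs + C xs))"
    unfolding pr by (simp add: e_def r_def)
  moreover have "- 2 * \<gamma> * inner (Y (Suc (Suc n)) i - xs) (forward n i - (B xs + C xs))
    \<le> 2 * \<gamma> * inner (Y (Suc (Suc n)) i - xs) (B (Y (Suc (Suc n)) i) - B (Y (Suc n) i))
      - 2 * \<gamma> * inner (Y (Suc n) i - xs) (B (Y (Suc n) i) - B (Y n i))
      + (\<gamma> * L + \<gamma> / (2 * \<beta>)) * (norm (Y (Suc (Suc n)) i - Y (Suc n) i))\<^sup>2
      + \<gamma> * L * (norm (Y (Suc n) i - Y n i))\<^sup>2"
    unfolding forward_def
    by (rule reflected_forward_estimate[OF B_mono' B_lipschitz' C_cocoercive' \<gamma>(1) \<beta> less_imp_le[OF L]])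
  ultimately show ?thesis unfolding e_def r_def by linarith
qed

lemma z_dist_step:
  assumes sol: "solution xs as"
  shows "z_dist (z_fixed xs as) (Suc (Suc n)) \<le> z_dist (z_fixed xs as) (Suc n) - z_incr (Suc n)
      + Phi xs (Suc n) - Phi xs n + (\<gamma> * L + \<gamma> / (2 * \<beta>)) * y_incr (Suc n) + \<gamma> * L * y_incr n"
proof -
  define zs where "zs = z_fixed xs as"
  define p where "p = X (Suc n) - xs"
  have "(\<Sum>i<m. \<omega> i * inner p (p - (z (Suc n) i - zs i)))
      = inner p ((\<Sum>i<m. \<omega> i) *\<^sub>R p - (\<Sum>i<m. \<omega> i *\<^sub>R z (Suc n) i) + (\<Sum>i<m. \<omega> i *\<^sub>R zs i))"
    by (simp add: inner_sum_right scaleR_sum_left sum_subtractf sum.distrib algebra_simps)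
  also have "\<dots> = 0"
    unfolding \<omega>_sum zs_def z_fixed_mean[OF sol] X_eq[symmetric] p_def by simp
  finally have cross: "(\<Sum>i<m. \<omega> i * inner p (p - (z (Suc n) i - zs i))) = 0" .
  have "z_dist zs (Suc (Suc n)) \<le> (\<Sum>i<m. \<omega> i * ((norm (z (Suc n) i - zs i))\<^sup>2
      - (norm (z (Suc (Suc n)) i - z (Suc n) i))\<^sup>2 + 2 * inner p (p - (z (Suc n) i - zs i))
      + 2 * \<gamma> * inner (Y (Suc (Suc n)) i - xs) (B (Y (Suc (Suc n)) i) - B (Y (Suc n) i))
      - 2 * \<gamma> * inner (Y (Suc n) i - xs) (B (Y (Suc n) i) - B (Y n i))
      + (\<gamma> * L + \<gamma> / (2 * \<beta>)) * (norm (Y (Suc (Suc n)) i - Y (Suc n) i))\<^sup>2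
      + \<gamma> * L * (norm (Y (Suc n) i - Y n i))\<^sup>2))"
    unfolding z_dist_def zs_def p_def
    by (intro sum_mono mult_left_mono z_dist_component_step[OF _ sol] \<omega>_nonneg) auto
  also have "\<dots> = z_dist zs (Suc n) - z_incr (Suc n) + 2 * (\<Sum>i<m. \<omega> i * inner p (p - (z (Suc n) i - zs i)))
      + Phi xs (Suc n) - Phi xs n + (\<gamma> * L + \<gamma> / (2 * \<beta>)) * y_incr (Suc n) + \<gamma> * L * y_incr n"
    unfolding z_dist_def z_incr_def y_incr_def Phi_def
    by (simp add: sum.distrib sum_subtractf sum_distrib_left algebra_simps)
  finally show ?thesis using cross unfolding zs_def by linarith
qed

lemma y_incr_Suc_le: "y_incr (Suc n) \<le> 2 * z_incr (Suc n) + 2 * z_incr n"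
proof -
  define u where "u i = z (Suc (Suc n)) i - z (Suc n) i" for i
  define b where "b i = z (Suc n) i - z n i" for i
  have X_diff: "X (Suc n) - X n = (\<Sum>j<m. \<omega> j *\<^sub>R b j)"
    unfolding X_eq b_def by (simp add: scaleR_diff_right sum_subtractf)
  have "Y (Suc (Suc n)) i - Y (Suc n) i = u i - (b i - (X (Suc n) - X n))" if "i < m" for i
    unfolding u_def b_def using Y_Suc[OF that, of "Suc n"] Y_Suc[OF that, of n]
    by (simp add: algebra_simps)
  hence "y_incr (Suc n) = (\<Sum>i<m. \<omega> i * (norm (u i - (b i - (\<Sum>j<m. \<omega> j *\<^sub>R b j))))\<^sup>2)"
    unfolding y_incr_def X_diff by (intro sum.cong) auto
  also have "\<dots> \<le> 2 * (\<Sum>i<m. \<omega> i * (norm (u i))\<^sup>2) + 2 * (\<Sum>i<m. \<omega> i * (norm (b i))\<^sup>2)"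
    by (rule weighted_diff_deviation_sq_le[OF \<omega>_sum \<omega>_nonneg])
  finally show ?thesis unfolding z_incr_def u_def b_def .
qed

lemma Y_dist_le:
  assumes sol: "solution xs as"
  shows "(\<Sum>i<m. \<omega> i * (norm (Y (Suc n) i - xs))\<^sup>2) \<le> z_dist (z_fixed xs as) (Suc n) + z_incr n"
proof -
  define a where "a i = z (Suc n) i - z_fixed xs as i" for i
  define b where "b i = z (Suc n) i - z n i" for i
  have "X n - xs = (\<Sum>j<m. \<omega> j *\<^sub>R z n j) - (\<Sum>j<m. \<omega> j *\<^sub>R z_fixed xs as j)"
    by (simp add: X_eq z_fixed_mean[OF sol])
  also have "\<dots> = (\<Sum>j<m. \<omega> j *\<^sub>R a j) - (\<Sum>j<m. \<omega> j *\<^sub>R b j)"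
    unfolding a_def b_def by (simp add: scaleR_diff_right sum_subtractf)
  finally have X_diff: "X n - xs = (\<Sum>j<m. \<omega> j *\<^sub>R a j) - (\<Sum>j<m. \<omega> j *\<^sub>R b j)" .
  have "Y (Suc n) i - xs = (\<Sum>j<m. \<omega> j *\<^sub>R a j) + (b i - (\<Sum>j<m. \<omega> j *\<^sub>R b j))"
    if "i < m" for i
  proof -
    have "Y (Suc n) i - xs = (X n - xs) + b i"
      unfolding b_def using Y_Suc[OF that, of n] by (simp add: algebra_simps)
    thus ?thesis unfolding X_diff by (simp add: algebra_simps)
  qed
  hence "(\<Sum>i<m. \<omega> i * (norm (Y (Suc n) i - xs))\<^sup>2)
      = (\<Sum>i<m. \<omega> i * (norm ((\<Sum>j<m. \<omega> j *\<^sub>R a j) + (b i - (\<Sum>j<m. \<omega> j *\<^sub>R b j))))\<^sup>2)"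
    by (intro sum.cong) auto
  also have "\<dots> \<le> (\<Sum>i<m. \<omega> i * (norm (a i))\<^sup>2) + (\<Sum>i<m. \<omega> i * (norm (b i))\<^sup>2)"
    by (rule weighted_mean_plus_deviation_sq_le[OF \<omega>_sum \<omega>_nonneg])
  finally show ?thesis unfolding z_dist_def z_incr_def a_def b_def .
qed

lemma Phi_le: "Phi xs n \<le> \<gamma> * L * ((\<Sum>i<m. \<omega> i * (norm (Y (Suc n) i - xs))\<^sup>2) + y_incr n)"
proof -
  have "Phi xs n \<le> (\<Sum>i<m. \<omega> i * (\<gamma> * (L * ((norm (Y (Suc n) i - xs))\<^sup>2 + (norm (Y (Suc n) i - Y n i))\<^sup>2))))"
    unfolding Phi_def
  proof (intro sum_mono mult_left_mono)
    show "2 * \<gamma> * inner (Y (Suc n) i - xs) (B (Y (Suc n) i) - B (Y n i))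
        \<le> \<gamma> * (L * ((norm (Y (Suc n) i - xs))\<^sup>2 + (norm (Y (Suc n) i - Y n i))\<^sup>2))" for i
      using inner_le_lipschitz[OF B_lipschitz' less_imp_le[OF L], of "Y (Suc n) i - xs"] \<gamma>(1)
      by (simp add: mult.assoc)
  qed (use \<omega>_nonneg in auto)
  also have "\<dots> = \<gamma> * L * ((\<Sum>i<m. \<omega> i * (norm (Y (Suc n) i - xs))\<^sup>2) + y_incr n)"
    unfolding y_incr_def by (simp add: sum.distrib sum_distrib_left algebra_simps)
  finally show ?thesis .
qed

text \<open>The step size condition on \<open>\<gamma>\<close> is equivalent to \<open>4 \<kappa> < 1\<close>.\<close>

definition \<kappa> :: real where "\<kappa> = 2 * \<gamma> * L + \<gamma> / (2 * \<beta>)"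

definition Psi :: "'a \<Rightarrow> (nat \<Rightarrow> 'a) \<Rightarrow> nat \<Rightarrow> real" where
  "Psi xs as n = z_dist (z_fixed xs as) (Suc n) - Phi xs n + \<gamma> * L * y_incr n + 2 * \<kappa> * z_incr n"

lemma \<kappa>_nonneg: "0 \<le> \<kappa>" and four_\<kappa>_less_1: "4 * \<kappa> < 1" and \<gamma>L_less_1: "\<gamma> * L < 1"
proof -
  have "\<gamma> * (2 * (1 + 4 * \<beta> * L)) < \<beta>"
    using \<gamma>(2) \<beta> L by (simp add: pos_less_divide_eq add_pos_pos)
  hence less: "2 * \<gamma> + 8 * \<gamma> * \<beta> * L < \<beta>" by (simp add: algebra_simps)
  show "0 \<le> \<kappa>" unfolding \<kappa>_def using \<gamma> L \<beta> by simp
  have "4 * \<kappa> = (2 * \<gamma> + 8 * \<gamma> * \<beta> * L) / \<beta>" unfolding \<kappa>_def using \<beta> by (simp add: field_simps)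
  thus "4 * \<kappa> < 1" using less \<beta> by simp
  have "(8 * \<gamma> * L) * \<beta> < 1 * \<beta>" using less \<gamma> by (simp add: algebra_simps)
  hence "8 * \<gamma> * L < 1" using \<beta> by (simp only: mult_less_cancel_right_pos)
  thus "\<gamma> * L < 1" using \<gamma> L by simp
qed

lemma z_incr_nonneg: "0 \<le> z_incr n" and y_incr_nonneg: "0 \<le> y_incr n"
  and z_dist_nonneg: "0 \<le> z_dist zs n"
  unfolding z_incr_def y_incr_def z_dist_def using \<omega>_nonneg by (auto intro: sum_nonneg)

lemma Psi_Suc_le:
  assumes "solution xs as"
  shows "Psi xs as (Suc n) \<le> Psi xs as n - (1 - 4 * \<kappa>) * z_incr (Suc n)"
  using z_dist_step[OF assms, of n] mult_left_mono[OF y_incr_Suc_le \<kappa>_nonneg, of n]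
  unfolding Psi_def \<kappa>_def by (simp add: algebra_simps)

lemma Psi_ge:
  assumes sol: "solution xs as"
  shows "(1 - \<gamma> * L) * z_dist (z_fixed xs as) (Suc n) \<le> Psi xs as n"
proof -
  have "\<gamma> * L * (\<Sum>i<m. \<omega> i * (norm (Y (Suc n) i - xs))\<^sup>2) \<le> \<gamma> * L * (z_dist (z_fixed xs as) (Suc n) + z_incr n)"
    using Y_dist_le[OF sol] \<gamma>(1) L by (simp add: mult_left_mono)
  moreover have "\<gamma> * L * z_incr n \<le> 2 * \<kappa> * z_incr n"
    using z_incr_nonneg \<gamma>(1) \<beta> L unfolding \<kappa>_def by (intro mult_right_mono) auto
  ultimately show ?thesis using Phi_le[of xs n] unfolding Psi_def by (simp add: algebra_simps)
qed

context
  fixes xs as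
  assumes sol: "solution xs as"
begin

lemma Psi_le_Psi_0: "Psi xs as n \<le> Psi xs as 0"
proof (induction n)
  case (Suc n)
  have "0 \<le> (1 - 4 * \<kappa>) * z_incr (Suc n)" using four_\<kappa>_less_1 z_incr_nonneg by simp
  thus ?case using Psi_Suc_le[OF sol, of n] Suc by linarith
qed simp

lemma Psi_nonneg: "0 \<le> Psi xs as n"
proof -
  have "0 \<le> (1 - \<gamma> * L) * z_dist (z_fixed xs as) (Suc n)" using \<gamma>L_less_1 z_dist_nonneg by simp
  thus ?thesis using Psi_ge[OF sol, of n] by linarith
qed

lemma z_dist_le: "z_dist (z_fixed xs as) (Suc n) \<le> Psi xs as 0 / (1 - \<gamma> * L)"
  using Psi_ge[OF sol, of n] Psi_le_Psi_0[of n] \<gamma>L_less_1 by (simp add: field_simps)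

lemma z_incr_tendsto_0: "z_incr \<longlonglongrightarrow> 0"
proof -
  have partial: "(1 - 4 * \<kappa>) * (\<Sum>k<K. z_incr (Suc k)) \<le> Psi xs as 0 - Psi xs as K" for K
  proof (induction K)
    case (Suc K)
    thus ?case using Psi_Suc_le[OF sol, of K] by (simp add: distrib_left)
  qed simp
  have "(\<Sum>k<K. z_incr (Suc k)) \<le> Psi xs as 0 / (1 - 4 * \<kappa>)" for K
  proof -
    have "(\<Sum>k<K. z_incr (Suc k)) * (1 - 4 * \<kappa>) \<le> Psi xs as 0"
      using partial[of K] Psi_nonneg[of K] by (simp add: mult.commute)
    thus ?thesis using four_\<kappa>_less_1 by (simp add: pos_le_divide_eq)
  qed
  hence "summable (\<lambda>k. z_incr (Suc k))" by (intro summableI_nonneg_bounded[OF z_incr_nonneg])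
  hence "(\<lambda>k. z_incr (Suc k)) \<longlonglongrightarrow> 0" by (rule summable_LIMSEQ_zero)
  thus ?thesis by (rule LIMSEQ_imp_Suc)
qed

lemma y_incr_tendsto_0: "y_incr \<longlonglongrightarrow> 0"
proof -
  have "(\<lambda>n. 2 * z_incr (Suc n) + 2 * z_incr n) \<longlonglongrightarrow> 2 * 0 + 2 * 0"
    using LIMSEQ_Suc[OF z_incr_tendsto_0] z_incr_tendsto_0 by (intro tendsto_add tendsto_mult_left)
  hence "(\<lambda>n. y_incr (Suc n)) \<longlonglongrightarrow> 0"
    by (intro tendsto_sandwich[of "\<lambda>_. 0" "\<lambda>n. y_incr (Suc n)" _ "\<lambda>n. 2 * z_incr (Suc n) + 2 * z_incr n"])
      (simp_all add: y_incr_nonneg y_incr_Suc_le)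
  thus ?thesis by (rule LIMSEQ_imp_Suc)
qed

lemma z_diff_tendsto_0:
  assumes i: "i < m"
  shows "(\<lambda>n. z (Suc n) i - z n i) \<longlonglongrightarrow> 0"
proof (rule tendsto_zero_if_scaled_sq_le[OF \<omega>_pos[OF i] z_incr_tendsto_0])
  show "\<omega> i * (norm (z (Suc n) i - z n i))\<^sup>2 \<le> z_incr n" for n
    unfolding z_incr_def by (rule weighted_component_le[OF i, of "\<lambda>j. z (Suc n) j - z n j"])
qed

lemma Y_diff_tendsto_0:
  assumes i: "i < m"
  shows "(\<lambda>n. Y (Suc n) i - Y n i) \<longlonglongrightarrow> 0"
proof (rule tendsto_zero_if_scaled_sq_le[OF \<omega>_pos[OF i] y_incr_tendsto_0])
  show "\<omega> i * (norm (Y (Suc n) i - Y n i))\<^sup>2 \<le> y_incr n" for n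
    unfolding y_incr_def by (rule weighted_component_le[OF i, of "\<lambda>j. Y (Suc n) j - Y n j"])
qed

lemma Phi_tendsto_0: "Phi xs \<longlonglongrightarrow> 0"
proof -
  obtain K where "\<forall>n. norm (z_incr n) \<le> K"
    using convergent_imp_Bseq[OF convergentI[OF z_incr_tendsto_0]] by (rule BseqE) blast
  hence K: "z_incr n \<le> K" for n by (auto dest: abs_le_D1)
  define D where "D = Psi xs as 0 / (1 - \<gamma> * L) + K"
  have "(\<lambda>n. \<omega> i * (2 * \<gamma> * inner (Y (Suc n) i - xs) (B (Y (Suc n) i) - B (Y n i))))
      \<longlonglongrightarrow> \<omega> i * (2 * \<gamma> * 0)" if i: "i < m" for i
  proof (intro tendsto_mult_left inner_tendsto_zero_if_bounded)
    show "norm (Y (Suc n) i - xs) \<le> sqrt (D / \<omega> i)" for n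
    proof (rule norm_le_if_scaled_sq_le[OF \<omega>_pos[OF i]])
      show "\<omega> i * (norm (Y (Suc n) i - xs))\<^sup>2 \<le> D"
        using weighted_component_le[OF i, of "\<lambda>j. Y (Suc n) j - xs"] Y_dist_le[OF sol, of n]
          z_dist_le[of n] K[of n] unfolding D_def by linarith
    qed
    show "(\<lambda>n. B (Y (Suc n) i) - B (Y n i)) \<longlonglongrightarrow> 0"
      using B_lipschitz' by (intro tendsto_0_le[OF Y_diff_tendsto_0[OF i], of _ L]) (simp add: mult.commute)
  qed
  hence "Phi xs \<longlonglongrightarrow> (\<Sum>i<m. \<omega> i * (2 * \<gamma> * 0))"
    unfolding Phi_def[abs_def] by (intro tendsto_sum) simp
  thus ?thesis by simp
qed

lemma Psi_convergent: "convergent (Psi xs as)"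
proof -
  have "decseq (Psi xs as)"
  proof (rule decseq_SucI)
    fix n
    have "0 \<le> (1 - 4 * \<kappa>) * z_incr (Suc n)" using four_\<kappa>_less_1 z_incr_nonneg by simp
    thus "Psi xs as (Suc n) \<le> Psi xs as n" using Psi_Suc_le[OF sol, of n] by linarith
  qed
  with Psi_nonneg show ?thesis using decseq_convergent[of "Psi xs as" 0] unfolding convergent_def by blast
qed

lemma z_dist_convergent: "convergent (\<lambda>n. z_dist (z_fixed xs as) (Suc n))"
proof -
  obtain l where "Psi xs as \<longlonglongrightarrow> l" using Psi_convergent unfolding convergent_def by blast
  hence "(\<lambda>n. Psi xs as n + Phi xs n - \<gamma> * L * y_incr n - 2 * \<kappa> * z_incr n)
      \<longlonglongrightarrow> l + 0 - \<gamma> * L * 0 - 2 * \<kappa> * 0"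
    by (intro tendsto_diff tendsto_add tendsto_mult_left Phi_tendsto_0 y_incr_tendsto_0 z_incr_tendsto_0)
  thus ?thesis unfolding Psi_def convergent_def by auto
qed

lemma z_bounded: "\<exists>M. \<forall>n i. i < m \<longrightarrow> norm (z (Suc n) i) \<le> M"
proof -
  define D where "D = Psi xs as 0 / (1 - \<gamma> * L)"
  define M where "M = (\<Sum>j<m. norm (z_fixed xs as j) + sqrt (D / \<omega> j))"
  have "norm (z (Suc n) i) \<le> M" if i: "i < m" for n i
  proof -
    have "\<omega> i * (norm (z (Suc n) i - z_fixed xs as i))\<^sup>2 \<le> D"
      using weighted_component_le[OF i, of "\<lambda>j. z (Suc n) j - z_fixed xs as j"] z_dist_le[of n]
      unfolding z_dist_def D_def by linarith
    hence "norm (z (Suc n) i - z_fixed xs as i) \<le> sqrt (D / \<omega> i)"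
      by (rule norm_le_if_scaled_sq_le[OF \<omega>_pos[OF i]])
    hence "norm (z (Suc n) i) \<le> norm (z_fixed xs as i) + sqrt (D / \<omega> i)"
      using norm_triangle_sub[of "z (Suc n) i" "z_fixed xs as i"] by linarith
    also have "\<dots> \<le> M" unfolding M_def
    proof (rule member_le_sum[of i "{..<m}" "\<lambda>j. norm (z_fixed xs as j) + sqrt (D / \<omega> j)"])
      have "D \<ge> 0" unfolding D_def using Psi_nonneg[of 0] \<gamma>L_less_1 by simp
      thus "0 \<le> norm (z_fixed xs as j) + sqrt (D / \<omega> j)" if "j \<in> {..<m} - {i}" for j
        using \<omega>_nonneg[of j] that by simp
    qed (use i in simp_all)
    finally show ?thesis .
  qed
  thus ?thesis by blast
qed

lemma forward_residual_tendsto_0: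
  assumes i: "i < m"
  shows "(\<lambda>n. forward n i - B (Y (Suc (Suc n)) i) - C (Y (Suc (Suc n)) i)) \<longlonglongrightarrow> 0"
proof -
  have d0: "(\<lambda>n. Y (Suc n) i - Y n i) \<longlonglongrightarrow> 0" and d1: "(\<lambda>n. Y (Suc (Suc n)) i - Y (Suc n) i) \<longlonglongrightarrow> 0"
    using Y_diff_tendsto_0[OF i] LIMSEQ_Suc by auto
  have "(\<lambda>n. (B (Y (Suc n) i) - B (Y n i)) - (B (Y (Suc (Suc n)) i) - B (Y (Suc n) i))
      - (C (Y (Suc (Suc n)) i) - C (Y (Suc n) i))) \<longlonglongrightarrow> 0 - 0 - 0"
  proof (intro tendsto_diff)
    show "(\<lambda>n. B (Y (Suc n) i) - B (Y n i)) \<longlonglongrightarrow> 0"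
      by (rule tendsto_0_le[OF d0, of _ L]) (simp add: B_lipschitz' mult.commute)
    show "(\<lambda>n. B (Y (Suc (Suc n)) i) - B (Y (Suc n) i)) \<longlonglongrightarrow> 0"
      by (rule tendsto_0_le[OF d1, of _ L]) (simp add: B_lipschitz' mult.commute)
    show "(\<lambda>n. C (Y (Suc (Suc n)) i) - C (Y (Suc n) i)) \<longlonglongrightarrow> 0"
      using cocoercive_lipschitz[OF C_cocoercive \<beta>]
      by (intro tendsto_0_le[OF d1, of _ "1 / \<beta>"]) (simp add: mult.commute)
  qed
  thus ?thesis unfolding forward_def by (simp add: algebra_simps scaleR_2)
qed

end

lemma a_res_plus_forward:
  assumes i: "i < m"
  shows "a_res n i + \<omega> i *\<^sub>R (B (Y (Suc (Suc n)) i) + C (Y (Suc (Suc n)) i))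
     = (\<omega> i / \<gamma>) *\<^sub>R (X (Suc n) - z (Suc (Suc n)) i)
       - \<omega> i *\<^sub>R (forward n i - B (Y (Suc (Suc n)) i) - C (Y (Suc (Suc n)) i))"
proof -
  have "a_res n i = (\<omega> i / \<gamma>) *\<^sub>R (stepsize i *\<^sub>R a_res n i)"
    using \<omega>_stepsize[OF i] \<gamma>(1) by (simp add: field_simps)
  also have "\<dots> = (\<omega> i / \<gamma>) *\<^sub>R (X (Suc n) - z (Suc (Suc n)) i) - \<omega> i *\<^sub>R forward n i"
    unfolding stepsize_a_res[OF i] using \<gamma>(1) by (simp add: scaleR_diff_right)
  finally show ?thesis by (simp add: algebra_simps)
qed

text \<open>\<open>monotone_sum p q n \<ge> 0\<close> sums the monotonicity inequalities of the operators
  \<open>A i + \<omega> i (B + C)\<close> between \<open>Y (n + 2)\<close> and \<open>p\<close>; \<open>coupling p q\<close> is its asymptotic form,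
  which passes to weak limits.\<close>

definition monotone_sum :: "(nat \<Rightarrow> 'a) \<Rightarrow> (nat \<Rightarrow> 'a) \<Rightarrow> nat \<Rightarrow> real" where
  "monotone_sum p q n = (\<Sum>i<m. inner (Y (Suc (Suc n)) i - p i)
      (a_res n i + \<omega> i *\<^sub>R (B (Y (Suc (Suc n)) i) + C (Y (Suc (Suc n)) i)) - q i))"

definition coupling :: "(nat \<Rightarrow> 'a) \<Rightarrow> (nat \<Rightarrow> 'a) \<Rightarrow> nat \<Rightarrow> real" where
  "coupling p q n = (\<Sum>i<m. inner (X (Suc n) - p i) ((\<omega> i / \<gamma>) *\<^sub>R (X (Suc n) - z (Suc n) i) - q i))"

lemma monotone_sum_nonneg:
  assumes q: "\<And>i. i < m \<Longrightarrow> q i \<in> A i (p i)"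
  shows "0 \<le> monotone_sum p (\<lambda>i. q i + \<omega> i *\<^sub>R (B (p i) + C (p i))) n"
  unfolding monotone_sum_def
proof (rule sum_nonneg)
  fix i assume "i \<in> {..<m}"
  hence i: "i < m" by simp
  define v where "v = Y (Suc (Suc n)) i"
  have "0 \<le> inner (v - p i) (a_res n i - q i) + \<omega> i * inner (v - p i) (B v - B (p i))
      + \<omega> i * inner (v - p i) (C v - C (p i))"
    using maximal_monotoneD[OF A[OF i] a_res_mem[OF i] q[OF i]] B_mono' C_mono' \<omega>_pos[OF i]
    unfolding v_def by simp
  thus "0 \<le> inner (Y (Suc (Suc n)) i - p i) (a_res n i + \<omega> i *\<^sub>R (B (Y (Suc (Suc n)) i)
      + C (Y (Suc (Suc n)) i)) - (q i + \<omega> i *\<^sub>R (B (p i) + C (p i))))"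
    unfolding v_def[symmetric] by (simp add: inner_diff_right inner_add_right algebra_simps)
qed

lemma X_Suc_bounded:
  assumes "\<forall>n i. i < m \<longrightarrow> norm (z (Suc n) i) \<le> M"
  shows "norm (X (Suc n)) \<le> M"
proof -
  have "norm (X (Suc n)) \<le> (\<Sum>j<m. \<omega> j * M)"
    unfolding X_eq using assms \<omega>_nonneg
    by (intro order_trans[OF norm_sum] sum_mono) (simp add: mult_left_mono)
  also have "\<dots> = M" using \<omega>_sum by (simp flip: sum_distrib_right)
  finally show ?thesis .
qed

lemma coupling_factors_bounded:
  assumes sol: "solution xs as" and i: "i < m"
  shows "\<exists>K. \<forall>n. norm (X (Suc n) - p) \<le> K \<and> norm ((\<omega> i / \<gamma>) *\<^sub>R (X (Suc n) - z (Suc n) i) - q) \<le> K"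
proof -
  obtain M where M: "\<forall>n i. i < m \<longrightarrow> norm (z (Suc n) i) \<le> M" using z_bounded[OF sol] by blast
  have "0 \<le> M" using M i norm_ge_zero order_trans by blast
  hence scaled_nonneg: "0 \<le> \<bar>\<omega> i / \<gamma>\<bar> * (M + M)" by simp
  have X_le: "norm (X (Suc n)) \<le> M" for n using X_Suc_bounded[OF M] .
  define K where "K = M + norm p + \<bar>\<omega> i / \<gamma>\<bar> * (M + M) + norm q"
  have "norm (X (Suc n) - p) \<le> K" for n
    using norm_triangle_ineq4[of "X (Suc n)" p] X_le[of n] scaled_nonneg norm_ge_zero[of q]
    unfolding K_def by linarith
  moreover have "norm ((\<omega> i / \<gamma>) *\<^sub>R (X (Suc n) - z (Suc n) i) - q) \<le> K" for n
  proof -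
    have "norm (X (Suc n) - z (Suc n) i) \<le> M + M"
      using norm_triangle_ineq4[of "X (Suc n)" "z (Suc n) i"] X_le[of n] M[rule_format, OF i, of n]
      by linarith
    hence "norm ((\<omega> i / \<gamma>) *\<^sub>R (X (Suc n) - z (Suc n) i)) \<le> \<bar>\<omega> i / \<gamma>\<bar> * (M + M)"
      unfolding norm_scaleR by (rule mult_left_mono) simp
    thus ?thesis
      using norm_triangle_ineq4[of "(\<omega> i / \<gamma>) *\<^sub>R (X (Suc n) - z (Suc n) i)" q]
        norm_ge_zero[of p] \<open>0 \<le> M\<close>
      unfolding K_def by linarith
  qed
  ultimately show ?thesis by blast
qed

lemma monotone_sum_minus_coupling_tendsto_0:
  assumes sol: "solution xs as"
  shows "(\<lambda>n. monotone_sum p q n - coupling p q n) \<longlonglongrightarrow> 0"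
proof -
  define W where "W n i = (\<omega> i / \<gamma>) *\<^sub>R (X (Suc n) - z (Suc n) i) - q i" for n i
  define r where "r n i = z (Suc (Suc n)) i - z (Suc n) i" for n i
  define e where "e n i = - ((\<omega> i / \<gamma>) *\<^sub>R r n i)
      - \<omega> i *\<^sub>R (forward n i - B (Y (Suc (Suc n)) i) - C (Y (Suc (Suc n)) i))" for n i
  have "monotone_sum p q n = (\<Sum>i<m. inner ((X (Suc n) - p i) + r n i) (W n i + e n i))" for n
    unfolding monotone_sum_def
  proof (intro sum.cong refl)
    fix i assume "i \<in> {..<m}"
    hence i: "i < m" by simp
    have "Y (Suc (Suc n)) i - p i = (X (Suc n) - p i) + r n i"
      unfolding r_def using Y_Suc[OF i, of "Suc n"] by (simp add: algebra_simps)
    moreover have "a_res n i + \<omega> i *\<^sub>R (B (Y (Suc (Suc n)) i) + C (Y (Suc (Suc n)) i)) - q i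
        = W n i + e n i"
      unfolding a_res_plus_forward[OF i] W_def e_def r_def by (simp add: algebra_simps)
    ultimately show "inner (Y (Suc (Suc n)) i - p i) (a_res n i + \<omega> i *\<^sub>R (B (Y (Suc (Suc n)) i)
        + C (Y (Suc (Suc n)) i)) - q i) = inner ((X (Suc n) - p i) + r n i) (W n i + e n i)"
      by (simp only:)
  qed
  hence "(\<lambda>n. monotone_sum p q n - coupling p q n)
      = (\<lambda>n. \<Sum>i<m. inner ((X (Suc n) - p i) + r n i) (W n i + e n i) - inner (X (Suc n) - p i) (W n i))"
    unfolding coupling_def W_def by (simp add: sum_subtractf)
  also have "\<dots> \<longlonglongrightarrow> (\<Sum>i<m. 0)"
  proof (rule tendsto_sum)
    fix i assume "i \<in> {..<m}"
    hence i: "i < m" by simp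
    obtain K where K: "\<And>n. norm (X (Suc n) - p i) \<le> K" "\<And>n. norm (W n i) \<le> K"
      using coupling_factors_bounded[OF sol i, of "p i" "q i"] unfolding W_def by blast
    have r: "(\<lambda>n. r n i) \<longlonglongrightarrow> 0"
      unfolding r_def using LIMSEQ_Suc[OF z_diff_tendsto_0[OF sol i]] by simp
    hence "(\<lambda>n. e n i) \<longlonglongrightarrow> 0"
      unfolding e_def using forward_residual_tendsto_0[OF sol i]
      by (intro tendsto_diff[where a = 0 and b = 0, simplified] tendsto_minus_cancel_left[THEN iffD1])
        (auto intro: tendsto_eq_intros)
    with K r show "(\<lambda>n. inner ((X (Suc n) - p i) + r n i) (W n i + e n i) - inner (X (Suc n) - p i) (W n i))
        \<longlonglongrightarrow> 0"
      by (rule inner_perturbation_tendsto_zero)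
  qed
  finally show ?thesis by simp
qed

lemma cluster_inequality:
  assumes sol: "solution xs as" and g: "strict_mono g"
    and wc: "\<forall>i<m. weakly_converges (\<lambda>k. z (Suc (g k)) i) (zb i)"
    and q: "\<And>i. i < m \<Longrightarrow> q i \<in> A i (p i)"
  shows "0 \<le> (\<Sum>i<m. inner ((\<Sum>j<m. \<omega> j *\<^sub>R zb j) - p i)
      ((\<omega> i / \<gamma>) *\<^sub>R ((\<Sum>j<m. \<omega> j *\<^sub>R zb j) - zb i) - (q i + \<omega> i *\<^sub>R (B (p i) + C (p i)))))"
    (is "0 \<le> ?limit")
proof -
  define qq where "qq i = q i + \<omega> i *\<^sub>R (B (p i) + C (p i))" for i
  have "(\<lambda>k. monotone_sum p qq (g k) - coupling p qq (g k)) \<longlonglongrightarrow> 0"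
    using LIMSEQ_subseq_LIMSEQ[OF monotone_sum_minus_coupling_tendsto_0[OF sol] g] by (simp add: o_def)
  moreover have "(\<lambda>k. coupling p qq (g k)) \<longlonglongrightarrow> ?limit"
    unfolding coupling_def X_eq qq_def by (rule weighted_coupling_tendsto[OF \<omega>_sum wc])
  ultimately have "(\<lambda>k. (monotone_sum p qq (g k) - coupling p qq (g k)) + coupling p qq (g k))
      \<longlonglongrightarrow> 0 + ?limit"
    by (rule tendsto_add)
  moreover have "0 \<le> monotone_sum p qq n" for n unfolding qq_def by (rule monotone_sum_nonneg[OF q])
  ultimately show ?thesis by (simp add: LIMSEQ_le_const)
qed

definition mean :: "(nat \<Rightarrow> 'a) \<Rightarrow> 'a" where "mean v = (\<Sum>j<m. \<omega> j *\<^sub>R v j)"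

text \<open>\<open>multiplier\<close> inverts \<open>z_fixed\<close>: it recovers the elements of the \<open>A i\<close> from a candidate
  fixed point of the \<open>z\<close>-update.\<close>

definition multiplier :: "(nat \<Rightarrow> 'a) \<Rightarrow> nat \<Rightarrow> 'a" where
  "multiplier zb i = (\<omega> i / \<gamma>) *\<^sub>R (mean zb - zb i) - \<omega> i *\<^sub>R (B (mean zb) + C (mean zb))"

lemma z_fixed_multiplier:
  assumes i: "i < m"
  shows "z_fixed (mean zb) (multiplier zb) i = zb i"
proof -
  have "stepsize i *\<^sub>R multiplier zb i = (mean zb - zb i) - \<gamma> *\<^sub>R (B (mean zb) + C (mean zb))"
    using \<omega>_stepsize[OF i] \<gamma>(1) unfolding multiplier_def
    by (simp add: scaleR_diff_right field_simps mult.commute[of "stepsize i"])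
  thus ?thesis unfolding z_fixed_def by (simp add: algebra_simps)
qed

lemma multiplier_sum: "(\<Sum>i<m. multiplier zb i) + B (mean zb) + C (mean zb) = 0"
proof -
  have "(\<Sum>i<m. \<omega> i *\<^sub>R (mean zb - zb i)) = (\<Sum>i<m. \<omega> i) *\<^sub>R mean zb - mean zb"
    by (simp add: scaleR_diff_right sum_subtractf scaleR_sum_left mean_def)
  hence "(\<Sum>i<m. \<omega> i *\<^sub>R (mean zb - zb i)) = 0" using \<omega>_sum by simp
  moreover have "(\<Sum>i<m. multiplier zb i) = (1 / \<gamma>) *\<^sub>R (\<Sum>i<m. \<omega> i *\<^sub>R (mean zb - zb i))
      - (\<Sum>i<m. \<omega> i) *\<^sub>R (B (mean zb) + C (mean zb))"
    unfolding multiplier_def by (simp add: sum_subtractf scaleR_sum_right scaleR_sum_left)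
  ultimately show ?thesis using \<omega>_sum by simp
qed

text \<open>Minty's trick: testing the limit inequality against the resolvent points \<open>P i\<close> of
  \<open>mean zb + t multiplier zb i\<close> forces \<open>P i = mean zb\<close>.\<close>

lemma cluster_multiplier_mem:
  assumes sol: "solution xs as" and g: "strict_mono g"
    and wc: "\<forall>i<m. weakly_converges (\<lambda>k. z (Suc (g k)) i) (zb i)"
  shows "\<forall>i<m. multiplier zb i \<in> A i (mean zb)"
proof -
  define xb where "xb = mean zb"
  define ab where "ab = multiplier zb"
  define K where "K = L + 1 / \<beta>"
  have K: "K > 0" unfolding K_def using L \<beta> by (intro add_pos_pos) simp_all
  define t where "t = 1 / (2 * K)"
  have t: "t > 0" "t * K \<le> 1/2" unfolding t_def using K by simp_all
  define P where "P i = resolvent (scale_op t (A i)) (xb + t *\<^sub>R ab i)" for i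
  define Q where "Q i = (1 / t) *\<^sub>R (xb + t *\<^sub>R ab i - P i)" for i
  define d where "d i = Q i - ab i" for i
  have Q: "Q i \<in> A i (P i)" if "i < m" for i
    unfolding P_def Q_def by (rule resolvent_scale_op_mem[OF A[OF that] t(1)])
  have xb_P: "xb - P i = t *\<^sub>R d i" for i
    unfolding d_def Q_def using t(1) by (simp add: algebra_simps)
  have "0 \<le> (\<Sum>i<m. inner (xb - P i) ((\<omega> i / \<gamma>) *\<^sub>R (xb - zb i) - (Q i + \<omega> i *\<^sub>R (B (P i) + C (P i)))))"
    unfolding xb_def mean_def by (rule cluster_inequality[OF sol g wc Q])
  also have "\<dots> \<le> (\<Sum>i<m. - (t / 2) * (norm (d i))\<^sup>2)"
  proof (rule sum_mono)
    fix i assume "i \<in> {..<m}"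
    hence i: "i < m" by simp
    have "(\<omega> i / \<gamma>) *\<^sub>R (xb - zb i) - (Q i + \<omega> i *\<^sub>R (B (P i) + C (P i)))
        = \<omega> i *\<^sub>R ((B xb + C xb) - (B (P i) + C (P i))) - d i"
      unfolding d_def ab_def xb_def multiplier_def by (simp add: algebra_simps)
    moreover have "norm ((B xb + C xb) - (B (P i) + C (P i))) \<le> K * norm (xb - P i)"
      unfolding K_def by (rule B_plus_C_lipschitz)
    ultimately show "inner (xb - P i) ((\<omega> i / \<gamma>) *\<^sub>R (xb - zb i) - (Q i + \<omega> i *\<^sub>R (B (P i) + C (P i))))
        \<le> - (t / 2) * (norm (d i))\<^sup>2"
      using inner_le_neg_sq_of_lipschitz_perturbation[OF xb_P _ t(1) _ _ t(2)]
        \<omega>_pos[OF i] \<omega>_le_1[OF i] by simp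
  qed
  finally have "(\<Sum>i<m. (t / 2) * (norm (d i))\<^sup>2) \<le> 0" by (simp add: sum_negf)
  moreover have "0 \<le> (\<Sum>i<m. (t / 2) * (norm (d i))\<^sup>2)" using t(1) by (intro sum_nonneg) simp
  ultimately have "(\<Sum>i<m. (t / 2) * (norm (d i))\<^sup>2) = 0" by linarith
  hence "\<forall>i\<in>{..<m}. (t / 2) * (norm (d i))\<^sup>2 = 0"
    using t(1) by (subst (asm) sum_nonneg_eq_0_iff) auto
  hence d0: "d i = 0" if "i < m" for i using t(1) that by simp
  show ?thesis
  proof (intro allI impI)
    fix i assume i: "i < m"
    have "P i = xb" using xb_P[of i] d0[OF i] by simp
    thus "multiplier zb i \<in> A i (mean zb)" using Q[OF i] d0[OF i] unfolding d_def xb_def ab_def by simp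
  qed
qed

lemma cluster_is_solution:
  assumes "solution xs as" "strict_mono g" "\<forall>i<m. weakly_converges (\<lambda>k. z (Suc (g k)) i) (zb i)"
  shows "solution (mean zb) (multiplier zb)"
  using cluster_multiplier_mem[OF assms] multiplier_sum unfolding solution_def by blast

lemma cluster_weighted_dist_convergent:
  assumes sol: "solution xs as" and g: "strict_mono g"
    and wc: "\<forall>i<m. weakly_converges (\<lambda>k. z (Suc (g k)) i) (zb i)"
  shows "convergent (\<lambda>n. \<Sum>i<m. \<omega> i * (norm (z (Suc n) i - zb i))\<^sup>2)"
proof -
  have "(\<Sum>i<m. \<omega> i * (norm (z (Suc n) i - zb i))\<^sup>2) = z_dist (z_fixed (mean zb) (multiplier zb)) (Suc n)"
    for n
    unfolding z_dist_def using z_fixed_multiplier by (intro sum.cong) auto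
  thus ?thesis using z_dist_convergent[OF cluster_is_solution[OF sol g wc]] by simp
qed

theorem weakly_converges_to_zer_sum:
  assumes "zer_sum m A B C \<noteq> {}"
  shows "\<exists>xl. weakly_converges x xl \<and> xl \<in> zer_sum m A B C"
proof -
  obtain xs as where sol: "solution xs as" using assms zer_sum_iff_solution by blast
  obtain M where M: "\<forall>n i. i < m \<longrightarrow> norm (z (Suc n) i) \<le> M" using z_bounded[OF sol] by blast
  hence bounded: "norm (z (Suc n) i) \<le> M" if "i < m" for n i using that by blast
  obtain g0 zb where g0: "strict_mono g0" and zb: "\<forall>i<m. weakly_converges (\<lambda>k. z (Suc (g0 k)) i) (zb i)"
    using bounded_seqs_have_weakly_convergent_subseq[of m "\<lambda>n i. z (Suc n) i", OF bounded] by blast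
  have zer: "mean zb \<in> zer_sum m A B C"
    using cluster_is_solution[OF sol g0 zb] zer_sum_iff_solution by blast
  have "weakly_converges (\<lambda>n. z (Suc n) i) (zb i)" if "i < m" for i
  proof (rule weakly_converges_if_clusters_eq[of m "\<lambda>n i. z (Suc n) i", OF bounded _ that])
    show "\<forall>i<m. l i = zb i"
      if "strict_mono g" "\<forall>i<m. weakly_converges (\<lambda>k. z (Suc (g k)) i) (l i)" for g l
      by (rule weak_clusters_eq_if_weighted_dist_convergent[OF \<omega>_pos that g0 zb
          cluster_weighted_dist_convergent[OF sol that] cluster_weighted_dist_convergent[OF sol g0 zb]])
  qed
  hence "weakly_converges (\<lambda>n. x (Suc (Suc n))) (mean zb)"
    unfolding mean_def x_rec by (intro weakly_converges_sum) simp
  hence "weakly_converges x (mean zb)"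
    unfolding weakly_converges_def using LIMSEQ_offset[of "\<lambda>n. inner (x n) _" 2]
    by (simp add: numeral_2_eq_2)
  thus ?thesis using zer by blast
qed

end

theorem theorem4p1:
  fixes A :: "nat \<Rightarrow> 'a::{real_inner, complete_space} \<Rightarrow> 'a set"
    and B C :: "'a \<Rightarrow> 'a"
    and m :: nat and L \<beta> \<gamma> :: real and \<omega> :: "nat \<Rightarrow> real"
    and x :: "nat \<Rightarrow> 'a" and z :: "nat \<Rightarrow> nat \<Rightarrow> 'a" and y :: "int \<Rightarrow> nat \<Rightarrow> 'a"
  assumes m: "m \<ge> 1"
    and A: "\<And>i. i < m \<Longrightarrow> maximal_monotone (A i)"
    and L: "L > 0" and Bmono: "monotone_fun B" and Blip: "L-lipschitz_on UNIV B"
    and \<beta>: "\<beta> > 0" and Ccoc: "cocoercive \<beta> C"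
    and nonempty: "zer_sum m A B C \<noteq> {}"
    and \<omega>: "\<And>i. i < m \<Longrightarrow> 0 < \<omega> i \<and> \<omega> i \<le> 1"
    and \<omega>sum: "(\<Sum>i<m. \<omega> i) = 1"
    and \<gamma>: "0 < \<gamma>" "\<gamma> < \<beta> / (2 * (1 + 4 * \<beta> * L))"
    and xrec: "\<And>n. x (Suc n) = (\<Sum>j<m. \<omega> j *\<^sub>R z n j)"
    and yrec: "\<And>n i. i < m \<Longrightarrow> y (int n + 1) i =
        resolvent (scale_op (\<gamma> / \<omega> i) (A i))
          (2 *\<^sub>R x (Suc n) - z n i - (2 * \<gamma>) *\<^sub>R B (y (int n) i)
           + \<gamma> *\<^sub>R B (y (int n - 1) i) - \<gamma> *\<^sub>R C (y (int n) i))"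
    and zrec: "\<And>n i. i < m \<Longrightarrow> z (Suc n) i = z n i + y (int n + 1) i - x (Suc n)"
  shows "\<exists>xl. weakly_converges x xl \<and> xl \<in> zer_sum m A B C"
proof -
  interpret splitting_iteration A B C m L \<beta> \<gamma> \<omega> x z y
    by (rule splitting_iteration.intro) (fact assms)+
  show ?thesis by (rule weakly_converges_to_zer_sum[OF nonempty])
qed

end
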